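(* Let $K$ satisfy the standing assumptions below together with condition (B) for some $\sigma\in(0,2)$, let $0<s<1<p<\infty$, $\frac{2-s}{p}+\frac{p}{p-1}<\alpha<\infty$ and $2+p+\frac{s-2}{p}<b<\infty$. For $f\in L^1(\mathbb{D},dA)$ define $$Tf(z)=\int_{\mathbb{D}}\frac{(1-|w|^2)^{b-1}}{|1-\bar w z|^{\alpha+b}}f(w)\,dA(w),\quad z\in\mathbb{D}.$$ If $|f(z)|^p(1-|z|^2)^{p-2+s}\,dA(z)$ is a $K$-Carleson measure, then $|Tf(z)|^p(1-|z|^2)^{p\alpha-2+s}\,dA(z)$ is also a $K$-Carleson measure.
   Context: $\mathbb{D}$ is the open unit disc and $dA$ the area measure normalized so that $A(\mathbb{D})=1$. Standing assumptions: $K:[0,\infty)\to[0,\infty)$ is nondecreasing, right-continuous, not identically zero, and with $\varphi_K(x)=\sup_{0<t\le 1}K(tx)/K(t)$ satisfies (A) $\int_0^1\frac{\varphi_K(x)}{x}\,dx<\infty$. Condition (B) for $\sigma>0$: $\int_1^\infty\frac{\varphi_K(x)}{x^{1+\sigma}}\,dx<\infty$. For an arc $I\subset\partial\mathbb{D}$, $|I|=\frac1{2\pi}\int_I|dz|$ and $S(I)=\{re^{i\theta}:e^{i\theta}\in I,\ 1-|I|\le r<1\}$; a positive Borel measure $\mu$ on $\mathbb{D}$ is a $K$-Carleson measure if $\sup_{I\subset\partial\mathbb{D}}\mu(S(I))/K(|I|)<\infty$. *)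

theory Defs
  imports "HOL-Analysis.Analysis"
begin

definition dA :: "complex measure" where
  "dA = density lborel (\<lambda>z. ennreal (indicator (ball 0 1) z / pi))"

definition phiK :: "(real \<Rightarrow> real) \<Rightarrow> real \<Rightarrow> ennreal" where
  "phiK K x = (SUP t\<in>{0<..1}. ennreal (K (t * x) / K t))"

definition condA :: "(real \<Rightarrow> real) \<Rightarrow> bool" where
  "condA K \<longleftrightarrow> (\<integral>\<^sup>+ x. indicator {0<..1} x * phiK K x * ennreal (1 / x) \<partial>lborel) < \<infinity>"

definition condB :: "(real \<Rightarrow> real) \<Rightarrow> real \<Rightarrow> bool" where
  "condB K \<sigma> \<longleftrightarrow>
     (\<integral>\<^sup>+ x. indicator {1..} x * phiK K x * ennreal (1 / x powr (1 + \<sigma>)) \<partial>lborel) < \<infinity>"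

text \<open>Standing assumptions on K (with K(t) > 0 for t > 0 so that the quotients in phi_K make sense).\<close>
definition standing_K :: "(real \<Rightarrow> real) \<Rightarrow> bool" where
  "standing_K K \<longleftrightarrow>
     (\<forall>t\<ge>0. K t \<ge> 0) \<and> (\<forall>t>0. K t > 0) \<and>
     mono_on {0..} K \<and>
     (\<forall>t\<ge>0. continuous (at_right t) K) \<and>
     (\<exists>t\<ge>0. K t \<noteq> 0) \<and>
     condA K"

text \<open>Closed arc I = {e^{i phi} : theta <= phi <= theta + 2 pi l}, of normalized length |I| = l,
  and the Carleson box S(I) = {r e^{i phi} : e^{i phi} in I, 1 - l <= r < 1}.\<close>
definition arc :: "real \<Rightarrow> real \<Rightarrow> complex set" where
  "arc \<theta> l = {cis \<phi> | \<phi>. \<theta> \<le> \<phi> \<and> \<phi> \<le> \<theta> + 2 * pi * l}"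

definition carleson_box :: "real \<Rightarrow> real \<Rightarrow> complex set" where
  "carleson_box \<theta> l = {complex_of_real r * \<zeta> | r \<zeta>. \<zeta> \<in> arc \<theta> l \<and> 1 - l \<le> r \<and> r < 1}"

text \<open>mu is a K-Carleson measure: sup over arcs I of mu(S(I))/K(|I|) is finite;
  arcs are parametrized by a starting angle theta and normalized length 0 < l <= 1.\<close>
definition K_Carleson :: "(real \<Rightarrow> real) \<Rightarrow> complex measure \<Rightarrow> bool" where
  "K_Carleson K \<mu> \<longleftrightarrow>
     (\<exists>C::real. \<forall>\<theta> l. 0 < l \<and> l \<le> 1 \<longrightarrow> emeasure \<mu> (carleson_box \<theta> l) \<le> ennreal (C * K l))"

definition T_op :: "real \<Rightarrow> real \<Rightarrow> (complex \<Rightarrow> complex) \<Rightarrow> complex \<Rightarrow> complex" where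
  "T_op \<alpha> b f z = (LINT w|dA. complex_of_real ((1 - (cmod w)\<^sup>2) powr (b - 1)
                         / (cmod (1 - cnj w * z)) powr (\<alpha> + b)) * f w)"

end

theory Submission
  imports Defs
begin

text \<open>
  Write \<open>d\<mu> = |f|\<^sup>p (1 - |w|\<^sup>2)\<^sup>p\<^sup>-\<^sup>2\<^sup>+\<^sup>s dA\<close> and split \<open>\<alpha> + b = 2 + a + c\<close> with
  \<open>a = \<alpha> - (2 - s)/p > 0\<close> and \<open>c > 0\<close>. Hoelder's inequality against the measure
  \<open>(1 - |w|\<^sup>2)\<^sup>c |1 - w\<^sup>* z|\<^sup>-\<^sup>2\<^sup>-\<^sup>a\<^sup>-\<^sup>c dA(w)\<close>, whose mass is \<open>O((1 - |z|\<^sup>2)\<^sup>-\<^sup>a)\<close> by the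
  Forelli-Rudin estimate, bounds \<open>|T f(z)|\<^sup>p (1 - |z|\<^sup>2)\<^sup>p\<^sup>\<alpha>\<^sup>-\<^sup>2\<^sup>+\<^sup>s\<close> by
  \<open>(1 - |z|\<^sup>2)\<^sup>a \<integral> (1 - |w|\<^sup>2)\<^sup>c |1 - w\<^sup>* z|\<^sup>-\<^sup>2\<^sup>-\<^sup>a\<^sup>-\<^sup>c d\<mu>(w)\<close>.
  Integrating over a Carleson box \<open>S(I)\<close> and exchanging the integrals, the integral of the
  kernel over \<open>S(I)\<close> is \<open>O(min 1 (|I| / |w - \<zeta>\<^sub>I|)\<^sup>2\<^sup>+\<^sup>a)\<close>, \<open>\<zeta>\<^sub>I\<close> the midpoint of \<open>I\<close>.
  The discs of radius \<open>2\<^sup>k |I|\<close> around \<open>\<zeta>\<^sub>I\<close> lie in Carleson boxes of comparable size,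
  whose \<open>\<mu>\<close>-measure is \<open>O(K(2\<^sup>k |I|)) = O(2\<^sup>k\<^sup>\<sigma> K(|I|))\<close> by condition (B); since
  \<open>\<sigma> < 2 < 2 + a\<close>, the dyadic sum is \<open>O(K(|I|))\<close>.
\<close>

section \<open>A dyadic layer-cake estimate\<close>

lemma ennreal_le_suminf: "(f::nat \<Rightarrow> ennreal) i \<le> (\<Sum>n. f n)"
  using sum_le_suminf[OF summableI, of "{i}" f] by simp

lemma min_one_powr_le_dyadic_sum:
  fixes r0 \<beta> R :: real
  assumes r0: "r0 > 0" and \<beta>: "\<beta> > 0"
  shows "ennreal (min 1 ((r0 / R) powr \<beta>))
    \<le> (\<Sum>k. ennreal (2 powr \<beta> * (2 powr (-\<beta>)) ^ k) * indicator {..<r0 * 2 ^ k} R)" (is "_ \<le> ?S")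
proof (cases "R < r0")
  case True
  have "ennreal (min 1 ((r0 / R) powr \<beta>)) \<le> ennreal (2 powr \<beta> * (2 powr (-\<beta>)) ^ 0) * indicator {..<r0 * 2 ^ 0} R"
    using True \<beta> ge_one_powr_ge_zero[of 2 \<beta>] by (auto intro!: ennreal_leI min.coboundedI1)
  also have "\<dots> \<le> ?S" by (rule ennreal_le_suminf)
  finally show ?thesis .
next
  case False
  then have R: "r0 \<le> R" by simp
  have ex: "\<exists>n. R < r0 * 2 ^ n"
    using real_arch_pow[of 2 "R / r0"] r0 by (auto simp: field_simps)
  define n where "n = (LEAST n. R < r0 * 2 ^ n)"
  have n: "R < r0 * 2 ^ n" unfolding n_def by (rule LeastI_ex[OF ex])
  obtain m where m: "n = Suc m" using n R by (cases n) auto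
  have Rm: "r0 * 2 ^ m \<le> R"
    using not_less_Least[of m "\<lambda>n. R < r0 * 2 ^ n"] unfolding n_def[symmetric] m by simp
  have "(r0 / R) powr \<beta> \<le> (r0 / (r0 * 2 ^ m)) powr \<beta>"
    using Rm r0 R \<beta> by (intro powr_mono2) (auto simp: field_simps)
  also have "\<dots> = (2 powr (-\<beta>)) ^ m"
  proof -
    have "r0 / (r0 * 2 ^ m) = 2 powr (- real m)"
      using r0 by (simp add: powr_minus powr_realpow divide_inverse)
    then show ?thesis
      by (simp add: powr_powr powr_realpow[symmetric] mult.commute)
  qed
  also have "\<dots> = 2 powr \<beta> * (2 powr (-\<beta>)) ^ n"
    by (simp add: m powr_minus)
  finally have "ennreal (min 1 ((r0 / R) powr \<beta>))
      \<le> ennreal (2 powr \<beta> * (2 powr (-\<beta>)) ^ n) * indicator {..<r0 * 2 ^ n} R"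
    using n by (auto intro!: ennreal_leI)
  also have "\<dots> \<le> ?S" by (rule ennreal_le_suminf)
  finally show ?thesis .
qed

lemma nn_integral_min_one_powr_le:
  fixes M :: "'a measure" and R :: "'a \<Rightarrow> real"
  assumes [measurable]: "R \<in> borel_measurable M" and r0: "r0 > 0" and \<gamma>: "0 \<le> \<gamma>" "\<gamma> < \<beta>"
    and A: "A \<ge> 0"
    and sublevel: "\<And>k. emeasure M {x\<in>space M. R x < r0 * 2 ^ k} \<le> ennreal (A * (2 powr \<gamma>) ^ k)"
  shows "(\<integral>\<^sup>+x. ennreal (min 1 ((r0 / R x) powr \<beta>)) \<partial>M)
      \<le> ennreal (A * 2 powr \<beta> / (1 - 2 powr (\<gamma> - \<beta>)))"
proof -
  define S where "S k = {x\<in>space M. R x < r0 * 2 ^ k}" for k :: nat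
  have [measurable]: "S k \<in> sets M" for k unfolding S_def by measurable
  define c where "c k = ennreal (2 powr \<beta> * (2 powr (-\<beta>)) ^ k)" for k :: nat
  have q: "2 powr (\<gamma> - \<beta>) < 1" using \<gamma> by (simp add: powr_less_one)
  have "(\<integral>\<^sup>+x. ennreal (min 1 ((r0 / R x) powr \<beta>)) \<partial>M) \<le> (\<integral>\<^sup>+x. (\<Sum>k. c k * indicator (S k) x) \<partial>M)"
  proof (rule nn_integral_mono)
    fix x assume x: "x \<in> space M"
    have "indicator {..<r0 * 2 ^ k} (R x) = (indicator (S k) x :: ennreal)" for k
      using x by (auto simp: S_def indicator_def)
    then show "ennreal (min 1 ((r0 / R x) powr \<beta>)) \<le> (\<Sum>k. c k * indicator (S k) x)"
      using min_one_powr_le_dyadic_sum[OF r0, of \<beta> "R x"] \<gamma> unfolding c_def by simp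
  qed
  also have "\<dots> = (\<Sum>k. c k * emeasure M (S k))"
    by (subst nn_integral_suminf) (auto simp: nn_integral_cmult_indicator)
  also have "\<dots> \<le> (\<Sum>k. ennreal (2 powr \<beta> * A * (2 powr (\<gamma> - \<beta>)) ^ k))"
  proof (intro suminf_le summableI)
    fix k
    have "c k * emeasure M (S k) \<le> c k * ennreal (A * (2 powr \<gamma>) ^ k)"
      using sublevel[of k] unfolding S_def by (intro mult_left_mono) auto
    also have "\<dots> = ennreal (2 powr \<beta> * A * (2 powr (\<gamma> - \<beta>)) ^ k)"
      unfolding c_def using A
      by (simp add: ennreal_mult''[symmetric] powr_diff powr_minus power_mult_distrib divide_inverse
          mult_ac power_inverse)
    finally show "c k * emeasure M (S k) \<le> ennreal (2 powr \<beta> * A * (2 powr (\<gamma> - \<beta>)) ^ k)" .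
  qed
  also have "\<dots> = ennreal (\<Sum>k. 2 powr \<beta> * A * (2 powr (\<gamma> - \<beta>)) ^ k)"
    using q A by (intro suminf_ennreal2 summable_mult summable_geometric) auto
  also have "(\<Sum>k. 2 powr \<beta> * A * (2 powr (\<gamma> - \<beta>)) ^ k) = A * 2 powr \<beta> / (1 - 2 powr (\<gamma> - \<beta>))"
    using q by (subst suminf_mult) (auto simp: suminf_geometric summable_geometric field_simps)
  finally show ?thesis .
qed

section \<open>The normalized area measure\<close>

lemma space_dA [simp]: "space dA = UNIV"
  by (simp add: dA_def)

lemma sets_dA [simp, measurable_cong]: "sets dA = sets lborel"
  by (simp add: dA_def)

lemma borel_ball [measurable]: "ball (x::'a::metric_space) r \<in> sets borel"
  by (simp add: borel_open)

lemma borel_measurable_cnj [measurable]: "cnj \<in> borel_measurable borel"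
  by (intro borel_measurable_continuous_onI continuous_intros)

lemma nn_integral_dA_restrict_disc:
  assumes [measurable]: "g \<in> borel_measurable lborel"
  shows "(\<integral>\<^sup>+x. g x \<partial>dA) = (\<integral>\<^sup>+x. indicator (ball 0 1) x * g x \<partial>dA)"
  unfolding dA_def
  by (subst (1 2) nn_integral_density) (auto intro!: nn_integral_cong simp: indicator_def)

lemma emeasure_density_dA_restrict_disc:
  assumes [measurable]: "g \<in> borel_measurable borel" "S \<in> sets borel"
  shows "emeasure (density dA g) S = emeasure (density dA g) (S \<inter> ball 0 1)"
proof -
  have "emeasure (density dA g) S = (\<integral>\<^sup>+x. indicator (ball 0 1) x * (g x * indicator S x) \<partial>dA)"
    by (subst emeasure_density) (auto intro: nn_integral_dA_restrict_disc)
  also have "\<dots> = (\<integral>\<^sup>+x. g x * indicator (S \<inter> ball 0 1) x \<partial>dA)"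
    by (intro nn_integral_cong) (auto simp: indicator_def)
  finally show ?thesis
    by (subst emeasure_density) auto
qed

lemma emeasure_dA_restrict_disc:
  assumes "S \<in> sets borel"
  shows "emeasure dA S = emeasure dA (S \<inter> ball 0 1)"
  using emeasure_density_dA_restrict_disc[of "\<lambda>_. 1" S] assms by (simp add: density_1)

lemma emeasure_lborel_ball_le:
  fixes x :: complex
  assumes r: "r \<ge> 0"
  shows "emeasure lborel (ball x r) \<le> ennreal (4 * r\<^sup>2)"
proof -
  define d where "d = Complex r r"
  have "ball x r \<subseteq> cbox (x - d) (x + d)"
  proof
    fix y assume "y \<in> ball x r"
    then have "cmod (x - y) < r" by (simp add: dist_norm)
    then have "\<bar>Re (x - y)\<bar> \<le> r" "\<bar>Im (x - y)\<bar> \<le> r"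
      using abs_Re_le_cmod[of "x - y"] abs_Im_le_cmod[of "x - y"] by linarith+
    then show "y \<in> cbox (x - d) (x + d)"
      by (auto simp: mem_box Basis_complex_def d_def)
  qed
  then have "emeasure lborel (ball x r) \<le> emeasure lborel (cbox (x - d) (x + d))"
    by (intro emeasure_mono) auto
  also have "\<dots> = ennreal (4 * r\<^sup>2)"
    using r by (subst emeasure_lborel_cbox) (auto simp: Basis_complex_def d_def power2_eq_square)
  finally show ?thesis .
qed

lemma emeasure_dA_ball_le:
  fixes x :: complex
  assumes r: "r \<ge> 0"
  shows "emeasure dA (ball x r) \<le> ennreal (4 / pi * r\<^sup>2)"
proof -
  have "emeasure dA (ball x r)
      = (\<integral>\<^sup>+y. ennreal (indicator (ball 0 1) y / pi) * indicator (ball x r) y \<partial>lborel)"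
    unfolding dA_def by (subst emeasure_density) auto
  also have "\<dots> \<le> (\<integral>\<^sup>+y. ennreal (1 / pi) * indicator (ball x r) y \<partial>lborel)"
    by (intro nn_integral_mono mult_right_mono) (auto simp: indicator_def)
  also have "\<dots> = ennreal (1 / pi) * emeasure lborel (ball x r)"
    by (rule nn_integral_cmult_indicator) auto
  also have "\<dots> \<le> ennreal (1 / pi) * ennreal (4 * r\<^sup>2)"
    by (intro mult_left_mono emeasure_lborel_ball_le[OF r]) auto
  also have "\<dots> = ennreal (4 / pi * r\<^sup>2)"
    by (simp add: ennreal_mult''[symmetric])
  finally show ?thesis .
qed

lemma finite_measure_dA: "finite_measure dA"
proof (rule finite_measureI)
  have "emeasure dA (space dA) = emeasure dA (ball 0 1)"
    using emeasure_dA_restrict_disc[of UNIV] by simp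
  also have "\<dots> \<le> ennreal (4 / pi * 1\<^sup>2)"
    by (rule emeasure_dA_ball_le) simp
  finally show "emeasure dA (space dA) \<noteq> \<infinity>"
    by (auto simp: top_unique)
qed

interpretation dA: finite_measure dA
  by (rule finite_measure_dA)

interpretation dA2: pair_sigma_finite dA dA
  by (simp add: pair_sigma_finite_def dA.sigma_finite_measure_axioms)

section \<open>Estimates for \<open>1 - w\<^sup>* z\<close>\<close>

lemma norm_one_minus_cnj_mult_sq:
  "(cmod (1 - cnj w * z))\<^sup>2 = (cmod (z - w))\<^sup>2 + (1 - (cmod z)\<^sup>2) * (1 - (cmod w)\<^sup>2)"
  unfolding cmod_power2 by (simp add: power2_eq_square) algebra

lemma norm_one_minus_cnj_mult_commute: "cmod (1 - cnj w * z) = cmod (1 - cnj z * w)"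
  by (metis complex_cnj_cnj complex_cnj_diff complex_cnj_mult complex_cnj_one complex_mod_cnj
      mult.commute)

lemma norm_diff_le_norm_one_minus_cnj_mult:
  assumes "cmod z \<le> 1" "cmod w \<le> 1"
  shows "cmod (z - w) \<le> cmod (1 - cnj w * z)"
proof -
  have "0 \<le> (1 - (cmod z)\<^sup>2) * (1 - (cmod w)\<^sup>2)"
    using assms by (intro mult_nonneg_nonneg) (auto simp: power_le_one abs_square_le_1)
  then have "(cmod (z - w))\<^sup>2 \<le> (cmod (1 - cnj w * z))\<^sup>2"
    using norm_one_minus_cnj_mult_sq[of w z] by linarith
  then show ?thesis by (simp add: power2_le_iff_abs_le)
qed

lemma one_minus_norm_le_norm_one_minus_cnj_mult:
  assumes "cmod w \<le> 1"
  shows "1 - cmod z \<le> cmod (1 - cnj w * z)"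
proof -
  have "1 - cmod z \<le> 1 - cmod (cnj w * z)"
    using assms by (simp add: norm_mult mult_left_le_one_le)
  also have "\<dots> \<le> cmod (1 - cnj w * z)"
    using norm_triangle_ineq2[of 1 "cnj w * z"] by simp
  finally show ?thesis .
qed

lemma norm_one_minus_cnj_mult_pos:
  assumes "cmod z < 1" "cmod w \<le> 1"
  shows "0 < cmod (1 - cnj w * z)"
  using one_minus_norm_le_norm_one_minus_cnj_mult[of w z] assms by linarith

lemma norm_radial_projection_diff_le:
  assumes z: "cmod z \<le> 1" and w: "cmod w \<le> 1"
  shows "cmod ((if z = 0 then 1 else z / cmod z) - w) \<le> 2 * cmod (1 - cnj w * z)"
proof -
  define \<zeta> where "\<zeta> = (if z = 0 then 1 else z / cmod z)"
  have "cmod (\<zeta> - z) = 1 - cmod z"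
  proof (cases "z = 0")
    case False
    have "\<zeta> - z = (1 - cmod z) * (z / cmod z)"
      using False by (simp add: \<zeta>_def field_simps)
    moreover have "(1::complex) - of_real (cmod z) = of_real (1 - cmod z)"
      by simp
    ultimately show ?thesis
      using False z by (simp add: norm_mult norm_divide del: of_real_diff)
  qed (simp add: \<zeta>_def)
  then have "cmod (\<zeta> - w) \<le> (1 - cmod z) + cmod (z - w)"
    using norm_triangle_ineq[of "\<zeta> - z" "z - w"] by simp
  also have "\<dots> \<le> 2 * cmod (1 - cnj w * z)"
    using norm_diff_le_norm_one_minus_cnj_mult[OF z w]
      one_minus_norm_le_norm_one_minus_cnj_mult[OF w, of z] by simp
  finally show ?thesis unfolding \<zeta>_def .
qed

definition one_minus_norm_sq :: "complex \<Rightarrow> real" where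
  "one_minus_norm_sq z = 1 - (cmod z)\<^sup>2"

lemma borel_measurable_one_minus_norm_sq [measurable]: "one_minus_norm_sq \<in> borel_measurable borel"
  unfolding one_minus_norm_sq_def by measurable

lemma one_minus_norm_sq_bounds:
  assumes "cmod z \<le> 1"
  shows "0 \<le> one_minus_norm_sq z" "one_minus_norm_sq z \<le> 2 * (1 - cmod z)"
proof -
  show "0 \<le> one_minus_norm_sq z"
    using assms by (simp add: one_minus_norm_sq_def power_le_one abs_square_le_1)
  have "one_minus_norm_sq z = (1 - cmod z) * (1 + cmod z)"
    by (simp add: one_minus_norm_sq_def power2_eq_square algebra_simps)
  also have "\<dots> \<le> (1 - cmod z) * 2"
    using assms by (intro mult_left_mono) auto
  finally show "one_minus_norm_sq z \<le> 2 * (1 - cmod z)" by simp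
qed

lemma one_minus_norm_sq_pos: "cmod z < 1 \<Longrightarrow> 0 < one_minus_norm_sq z"
  unfolding one_minus_norm_sq_def by (simp add: power_less_one_iff abs_square_less_1)

lemma emeasure_dA_norm_one_minus_cnj_mult_less:
  assumes z: "cmod z \<le> 1" and r: "r \<ge> 0"
  shows "emeasure dA {w. cmod (1 - cnj w * z) < r} \<le> ennreal (16 / pi * r\<^sup>2)"
proof -
  define \<zeta> where "\<zeta> = (if z = 0 then 1 else z / cmod z)"
  have "{w. cmod (1 - cnj w * z) < r} \<inter> ball 0 1 \<subseteq> ball \<zeta> (2 * r)"
  proof
    fix w assume w: "w \<in> {w. cmod (1 - cnj w * z) < r} \<inter> ball 0 1"
    then have "cmod (\<zeta> - w) \<le> 2 * cmod (1 - cnj w * z)"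
      using norm_radial_projection_diff_le[OF z, of w] by (simp add: \<zeta>_def)
    then show "w \<in> ball \<zeta> (2 * r)"
      using w by (simp add: dist_norm)
  qed
  then have "emeasure dA {w. cmod (1 - cnj w * z) < r} \<le> emeasure dA (ball \<zeta> (2 * r))"
    by (subst emeasure_dA_restrict_disc) (auto intro!: emeasure_mono)
  also have "\<dots> \<le> ennreal (4 / pi * (2 * r)\<^sup>2)"
    using r by (intro emeasure_dA_ball_le) auto
  finally show ?thesis
    by (simp add: power_mult_distrib)
qed

text \<open>On the disc \<open>|1 - w\<^sup>* z| \<ge> 1 - |z|\<close>, and the sublevel sets of \<open>|1 - w\<^sup>* z|\<close> have
  area \<open>O(r\<^sup>2)\<close>, so the layer-cake lemma applies.\<close>
lemma forelli_rudin_estimate: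
  assumes c: "c > 0"
  obtains C where "C > 0" "\<And>z. cmod z < 1 \<Longrightarrow>
    (\<integral>\<^sup>+w. ennreal (1 / cmod (1 - cnj w * z) powr (2 + c)) \<partial>dA) \<le> ennreal (C * (1 - cmod z) powr (-c))"
proof
  define C where "C = 16 / pi * 2 powr (2 + c) / (1 - 2 powr (- c))"
  have q: "2 powr (- c) < 1" using c by (simp add: powr_less_one)
  then show "C > 0" unfolding C_def by (auto intro!: divide_pos_pos)
  fix z :: complex assume z: "cmod z < 1"
  define \<delta> where "\<delta> = 1 - cmod z"
  have \<delta>: "\<delta> > 0" using z by (simp add: \<delta>_def)
  define R where "R w = cmod (1 - cnj w * z)" for w
  have [measurable]: "R \<in> borel_measurable borel" unfolding R_def by measurable
  have "(\<integral>\<^sup>+w. ennreal (1 / cmod (1 - cnj w * z) powr (2 + c)) \<partial>dA)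
      = (\<integral>\<^sup>+w. indicator (ball 0 1) w * ennreal (1 / R w powr (2 + c)) \<partial>dA)"
    unfolding R_def by (rule nn_integral_dA_restrict_disc) measurable
  also have "\<dots> \<le> (\<integral>\<^sup>+w. ennreal (\<delta> powr (-(2 + c))) * ennreal (min 1 ((\<delta> / R w) powr (2 + c))) \<partial>dA)"
  proof (intro nn_integral_mono)
    fix w
    show "indicator (ball 0 1) w * ennreal (1 / R w powr (2 + c))
        \<le> ennreal (\<delta> powr (-(2 + c))) * ennreal (min 1 ((\<delta> / R w) powr (2 + c)))"
    proof (cases "w \<in> ball 0 1")
      case True
      then have Rd: "\<delta> \<le> R w"
        using one_minus_norm_le_norm_one_minus_cnj_mult[of w z] by (simp add: R_def \<delta>_def)
      then have "(\<delta> / R w) powr (2 + c) \<le> 1"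
        using \<delta> c by (intro powr_le1) auto
      moreover have "\<delta> powr (-(2 + c)) * (\<delta> / R w) powr (2 + c) = 1 / R w powr (2 + c)"
      proof -
        have "\<delta> powr (-(2 + c)) * \<delta> powr (2 + c) = 1"
          using \<delta> by (simp add: powr_add[symmetric])
        then show ?thesis
          using \<delta> Rd by (simp add: powr_divide field_simps)
      qed
      ultimately show ?thesis
        using True \<delta> Rd by (simp add: ennreal_mult''[symmetric])
    qed simp
  qed
  also have "\<dots> = ennreal (\<delta> powr (-(2 + c))) * (\<integral>\<^sup>+w. ennreal (min 1 ((\<delta> / R w) powr (2 + c))) \<partial>dA)"
    by (rule nn_integral_cmult) measurable
  also have "\<dots> \<le> ennreal (\<delta> powr (-(2 + c))) * ennreal (16 / pi * \<delta>\<^sup>2 * 2 powr (2 + c) / (1 - 2 powr (2 - (2 + c))))"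
  proof (intro mult_left_mono nn_integral_min_one_powr_le)
    fix k :: nat
    have "emeasure dA {x \<in> space dA. R x < \<delta> * 2 ^ k} \<le> ennreal (16 / pi * (\<delta> * 2 ^ k)\<^sup>2)"
    proof -
      have "{x \<in> space dA. R x < \<delta> * 2 ^ k} = {w. cmod (1 - cnj w * z) < \<delta> * 2 ^ k}"
        by (simp add: R_def)
      moreover have "cmod z \<le> 1" "\<delta> * 2 ^ k \<ge> 0"
        using z \<delta> by simp_all
      ultimately show ?thesis
        by (metis emeasure_dA_norm_one_minus_cnj_mult_less)
    qed
    also have "\<dots> = ennreal (16 / pi * \<delta>\<^sup>2 * (2 powr 2) ^ k)"
      by (simp add: power_mult_distrib power_mult[symmetric] mult.commute[of k 2] power_mult)
    finally show "emeasure dA {x \<in> space dA. R x < \<delta> * 2 ^ k} \<le> ennreal (16 / pi * \<delta>\<^sup>2 * (2 powr 2) ^ k)" .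
  qed (use \<delta> c in auto)
  also have "\<dots> = ennreal (C * \<delta> powr (-c))"
  proof -
    have "\<delta> powr (-(2 + c)) * \<delta> powr 2 = \<delta> powr (-(2 + c) + 2)"
      by (rule powr_add[symmetric])
    then have "\<delta> powr (-(2 + c)) * \<delta>\<^sup>2 = \<delta> powr (-c)"
      using \<delta> by (simp add: powr_realpow)
    then have "\<delta> powr (-(2 + c)) * (16 / pi * \<delta>\<^sup>2 * 2 powr (2 + c) / (1 - 2 powr (2 - (2 + c))))
        = C * \<delta> powr (-c)"
      by (simp add: C_def field_simps)
    moreover have "0 \<le> 16 / pi * \<delta>\<^sup>2 * 2 powr (2 + c) / (1 - 2 powr (2 - (2 + c)))"
      using q by (intro divide_nonneg_nonneg) auto
    ultimately show ?thesis
      by (subst ennreal_mult[symmetric]) auto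
  qed
  finally show "(\<integral>\<^sup>+w. ennreal (1 / cmod (1 - cnj w * z) powr (2 + c)) \<partial>dA)
      \<le> ennreal (C * (1 - cmod z) powr (-c))"
    by (simp add: \<delta>_def)
qed

section \<open>Carleson boxes\<close>

lemma norm_cis_minus_one: "cmod (cis b - 1) = 2 * \<bar>sin (b / 2)\<bar>"
  using dist_exp_i_1[of b] by (simp add: cis_conv_exp mult.commute)

lemma norm_cis_diff_le: "cmod (cis a - cis b) \<le> \<bar>a - b\<bar>"
proof -
  have "cis a - cis b = cis b * (cis (a - b) - 1)"
    by (simp add: algebra_simps cis_mult)
  then have "cmod (cis a - cis b) = 2 * \<bar>sin ((a - b) / 2)\<bar>"
    by (simp add: norm_mult norm_cis_minus_one)
  then show ?thesis
    using abs_sin_x_le_abs_x[of "(a - b) / 2"] by simp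
qed

lemma third_le_sin:
  fixes y :: real
  assumes y: "0 \<le> y" "y \<le> pi / 2"
  shows "y / 3 \<le> sin y"
proof (cases "y \<le> pi / 3")
  case True
  show ?thesis
  proof (cases "y = 0")
    case False
    then have ypos: "0 < y" using y by simp
    obtain \<xi> where \<xi>: "0 < \<xi>" "\<xi> < y" "sin y - sin 0 = (y - 0) * cos \<xi>"
      using MVT2[OF ypos, of sin cos] by (auto intro: DERIV_sin)
    have "cos (pi / 3) \<le> cos \<xi>"
      using \<xi> True by (intro cos_monotone_0_pi_le) auto
    then have "1 / 2 \<le> cos \<xi>" by (simp add: cos_60)
    then have "y * (1 / 2) \<le> y * cos \<xi>" using ypos by (intro mult_left_mono) auto
    then show ?thesis using \<xi> ypos by simp
  qed simp
next
  case False
  have "sin (pi / 3) \<le> sin y"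
    using False y by (intro sin_monotone_2pi_le) auto
  then have "sqrt 3 / 2 \<le> sin y" by (simp add: sin_60)
  moreover have "4 / 3 \<le> sqrt 3"
    by (rule real_le_rsqrt) (simp add: power2_eq_square)
  moreover have "y \<le> 2" using y pi_less_4 by simp
  ultimately show ?thesis by simp
qed

lemma abs_le_norm_cis_minus_one:
  assumes "\<bar>b\<bar> \<le> pi"
  shows "\<bar>b\<bar> \<le> 3 * cmod (cis b - 1)"
proof -
  have "\<bar>b\<bar> / 2 / 3 \<le> sin (\<bar>b\<bar> / 2)"
    using assms by (intro third_le_sin) auto
  moreover have "sin (\<bar>b\<bar> / 2) = \<bar>sin (b / 2)\<bar>"
    using sin_ge_zero[of "b / 2"] sin_ge_zero[of "- b / 2"] assms
    by (cases "b \<ge> 0") auto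
  ultimately show ?thesis by (simp add: norm_cis_minus_one)
qed

lemma abs_Arg_le:
  assumes "cmod (u - 1) < r" "1 - cmod u < r" "cmod u \<le> 1"
  shows "\<bar>Arg u\<bar> \<le> 6 * r"
proof -
  have u: "u = of_real (cmod u) * cis (Arg u)"
    using rcis_cmod_Arg[of u] by (simp add: rcis_def)
  have "cmod (cis (Arg u) - u) = cmod ((1 - of_real (cmod u)) * cis (Arg u))"
    by (subst (2) u) (simp add: algebra_simps)
  also have "\<dots> = 1 - cmod u"
    using assms(3) norm_of_real[of "1 - cmod u"] by (simp add: norm_mult del: norm_of_real)
  finally have "cmod (cis (Arg u) - 1) < 2 * r"
    using norm_triangle_ineq[of "cis (Arg u) - u" "u - 1"] assms(1,2) by simp
  moreover have "\<bar>Arg u\<bar> \<le> 3 * cmod (cis (Arg u) - 1)"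
    using Arg_bounded[of u] by (intro abs_le_norm_cis_minus_one) (simp add: abs_le_iff)
  ultimately show ?thesis by simp
qed

lemma mem_carleson_boxD:
  assumes l: "0 < l" "l \<le> 1" and z: "z \<in> carleson_box \<theta> l"
  shows "cmod z < 1" "1 - cmod z \<le> l" "cmod (z - cis (\<theta> + pi * l)) \<le> 5 * l"
proof -
  obtain r \<phi> where z: "z = of_real r * cis \<phi>" and \<phi>: "\<theta> \<le> \<phi>" "\<phi> \<le> \<theta> + 2 * pi * l"
    and r: "1 - l \<le> r" "r < 1"
    using z unfolding carleson_box_def arc_def by blast
  have cz: "cmod z = r" using r l by (simp add: z norm_mult)
  show "cmod z < 1" "1 - cmod z \<le> l" using cz r by auto
  have "cmod (z - cis \<phi>) = cmod ((of_real r - 1) * cis \<phi>)"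
    by (simp add: z algebra_simps)
  also have "\<dots> = 1 - r"
    using r norm_of_real[of "r - 1"] by (simp add: norm_mult del: norm_of_real)
  finally have "cmod (z - cis \<phi>) \<le> l" using r by simp
  moreover have "cmod (cis \<phi> - cis (\<theta> + pi * l)) \<le> pi * l"
    using norm_cis_diff_le[of \<phi> "\<theta> + pi * l"] \<phi> by (simp add: abs_le_iff)
  ultimately have "cmod (z - cis (\<theta> + pi * l)) \<le> l + pi * l"
    using norm_triangle_ineq[of "z - cis \<phi>" "cis \<phi> - cis (\<theta> + pi * l)"] by simp
  also have "\<dots> \<le> 5 * l" using pi_less_4 l by simp
  finally show "cmod (z - cis (\<theta> + pi * l)) \<le> 5 * l" .
qed

lemma carleson_box_borel [measurable]: "carleson_box \<theta> l \<in> sets borel"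
proof -
  define g where "g = (\<lambda>(r::real, \<phi>::real). of_real r * cis \<phi> :: complex)"
  define P where "P n = {1 - l .. 1 - 1 / Suc n} \<times> {\<theta> .. \<theta> + 2 * pi * l}" for n :: nat
  have cont: "continuous_on UNIV g" unfolding g_def
    by (auto intro!: continuous_intros simp: case_prod_unfold cis_conv_exp)
  have "carleson_box \<theta> l = (\<Union>n. g ` P n)"
  proof (intro equalityI subsetI)
    fix z assume "z \<in> carleson_box \<theta> l"
    then obtain r \<phi> where z: "z = of_real r * cis \<phi>" and \<phi>: "\<theta> \<le> \<phi>" "\<phi> \<le> \<theta> + 2 * pi * l"
      and r: "1 - l \<le> r" "r < 1"
      unfolding carleson_box_def arc_def by blast
    obtain n where n: "1 / Suc n < 1 - r" using r(2) by (metis diff_gt_0_iff_gt nat_approx_posE)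
    have "z \<in> g ` P n"
      by (rule image_eqI[of _ _ "(r, \<phi>)"]) (use n r \<phi> in \<open>auto simp: z g_def P_def\<close>)
    then show "z \<in> (\<Union>n. g ` P n)" by blast
  next
    fix z assume "z \<in> (\<Union>n. g ` P n)"
    then obtain n r \<phi> where z: "z = of_real r * cis \<phi>" and \<phi>: "\<theta> \<le> \<phi>" "\<phi> \<le> \<theta> + 2 * pi * l"
      and r: "1 - l \<le> r" "r \<le> 1 - 1 / Suc n" by (auto simp: g_def P_def)
    have "r < 1" using r(2) by (smt (verit) of_nat_0_less_iff zero_less_Suc divide_pos_pos)
    then show "z \<in> carleson_box \<theta> l" unfolding carleson_box_def arc_def using r \<phi> z by blast
  qed
  moreover have "g ` P n \<in> sets borel" for n
    unfolding P_def
    by (intro borel_closed compact_imp_closed compact_continuous_image continuous_on_subset[OF cont]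
        compact_Times compact_Icc) auto
  ultimately show ?thesis by auto
qed

lemma disc_inter_ball_subset_carleson_box:
  assumes r: "r > 0"
  shows "ball (cis \<theta>) r \<inter> ball 0 1 \<subseteq> carleson_box (\<theta> - pi * min 1 (2 * r)) (min 1 (2 * r))"
proof
  fix w assume w: "w \<in> ball (cis \<theta>) r \<inter> ball 0 1"
  define l where "l = min 1 (2 * r)"
  define u where "u = w * cis (- \<theta>)"
  have norm_u: "cmod u = cmod w" by (simp add: u_def norm_mult)
  have "w = u * cis \<theta>" by (simp add: u_def mult.assoc cis_mult)
  also have "u = of_real (cmod w) * cis (Arg u)"
    using rcis_cmod_Arg[of u] by (simp add: rcis_def norm_u)
  finally have w_eq: "w = of_real (cmod w) * cis (Arg u + \<theta>)"
    by (simp add: mult.assoc cis_mult)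
  have w1: "cmod w < 1" using w by simp
  have wr: "cmod (cis \<theta> - w) < r" using w by (simp add: dist_norm)
  then have rw: "1 - cmod w < r"
    using norm_triangle_ineq2[of "cis \<theta>" w] by simp
  have "\<bar>Arg u\<bar> \<le> pi * l"
  proof (cases "l = 1")
    case True
    then show ?thesis using Arg_bounded[of u] by (simp add: abs_le_iff)
  next
    case False
    then have l: "l = 2 * r" by (simp add: l_def min_def split: if_splits)
    have "cmod (u - 1) = cmod ((w - cis \<theta>) * cis (- \<theta>))"
      by (simp add: u_def algebra_simps cis_mult)
    also have "\<dots> < r" using wr by (simp add: norm_mult norm_minus_commute)
    finally have "\<bar>Arg u\<bar> \<le> 6 * r"
      using rw w1 norm_u by (intro abs_Arg_le) auto
    also have "\<dots> \<le> pi * l" using pi_gt3 r l by simp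
    finally show ?thesis .
  qed
  moreover have "1 - l \<le> cmod w" using rw w1 r by (simp add: l_def min_def)
  ultimately show "w \<in> carleson_box (\<theta> - pi * min 1 (2 * r)) (min 1 (2 * r))"
    unfolding carleson_box_def arc_def l_def[symmetric] using w_eq w1
    by (intro CollectI exI[of _ "cmod w"] exI[of _ "cis (Arg u + \<theta>)"]) (auto simp: abs_le_iff)
qed

lemma disc_subset_carleson_box: "ball 0 1 \<subseteq> carleson_box (- pi) 1"
proof -
  have "ball (0::complex) 1 \<subseteq> ball (cis 0) 3"
  proof
    fix w :: complex assume "w \<in> ball 0 1"
    then show "w \<in> ball (cis 0) 3"
      using norm_triangle_ineq4[of 1 w] by (simp add: dist_norm)
  qed
  then show ?thesis
    using disc_inter_ball_subset_carleson_box[of 3 0] by auto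
qed

section \<open>Growth of \<open>K\<close>\<close>

lemma phiK_ge:
  assumes "0 < t" "t \<le> 1"
  shows "ennreal (K (t * x) / K t) \<le> phiK K x"
  unfolding phiK_def using assms by (intro SUP_upper) auto

lemma phiK_mono:
  assumes K: "standing_K K" and xy: "0 \<le> x" "x \<le> y"
  shows "phiK K x \<le> phiK K y"
  unfolding phiK_def
proof (intro SUP_mono bexI)
  fix t assume t: "t \<in> {0<..1::real}"
  have "K (t * x) \<le> K (t * y)"
    using K t xy unfolding standing_K_def by (intro mono_onD[of "{0..}" K]) (auto intro: mult_left_mono)
  then show "ennreal (K (t * x) / K t) \<le> ennreal (K (t * y) / K t)"
    using K t by (intro ennreal_leI divide_right_mono) (auto simp: standing_K_def)
qed (use xy in auto)

text \<open>As \<open>phiK K\<close> is nondecreasing, \<open>phiK K x x\<^sup>-\<^sup>\<sigma> 2\<^sup>-\<^sup>1\<^sup>-\<^sup>\<sigma> \<le> \<integral>\<^sub>x\<^sup>2\<^sup>x phiK K y y\<^sup>-\<^sup>1\<^sup>-\<^sup>\<sigma> dy\<close>,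
  which is bounded by the integral in condition (B).\<close>
lemma phiK_le_powr:
  assumes K: "standing_K K" and B: "condB K \<sigma>" and \<sigma>: "\<sigma> > 0"
  obtains M where "M \<ge> 0" "\<And>x. 1 \<le> x \<Longrightarrow> phiK K x \<le> ennreal (M * x powr \<sigma>)"
proof
  define I where "I = (\<integral>\<^sup>+ x. indicator {1..} x * phiK K x * ennreal (1 / x powr (1 + \<sigma>)) \<partial>lborel)"
  have I: "I = ennreal (enn2real I)"
    using B unfolding condB_def I_def by (simp add: less_top)
  define M where "M = enn2real I * 2 powr (1 + \<sigma>)"
  show "M \<ge> 0" by (simp add: M_def)
  fix x :: real assume x: "1 \<le> x"
  define c where "c = x / (2 * x) powr (1 + \<sigma>)"
  have c: "c > 0" using x by (simp add: c_def)
  have "phiK K x * ennreal c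
      = (\<integral>\<^sup>+ y. phiK K x * ennreal (1 / (2 * x) powr (1 + \<sigma>)) * indicator {x..2*x} y \<partial>lborel)"
    using x by (subst nn_integral_cmult_indicator) (auto simp: c_def ennreal_mult[symmetric] mult.assoc)
  also have "\<dots> \<le> I" unfolding I_def
  proof (intro nn_integral_mono)
    fix y
    show "phiK K x * ennreal (1 / (2 * x) powr (1 + \<sigma>)) * indicator {x..2*x} y
        \<le> indicator {1..} y * phiK K y * ennreal (1 / y powr (1 + \<sigma>))"
    proof (cases "y \<in> {x..2*x}")
      case True
      have "phiK K x \<le> phiK K y" using True x by (intro phiK_mono[OF K]) auto
      moreover have "ennreal (1 / (2 * x) powr (1 + \<sigma>)) \<le> ennreal (1 / y powr (1 + \<sigma>))"
        using True x \<sigma> by (intro ennreal_leI divide_left_mono powr_mono2) auto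
      ultimately show ?thesis using True x by (auto intro: mult_mono)
    qed simp
  qed
  finally have "phiK K x * ennreal c \<le> ennreal (enn2real I)"
    using I by simp
  then have "phiK K x * ennreal c * ennreal (1 / c) \<le> ennreal (enn2real I) * ennreal (1 / c)"
    by (rule mult_right_mono) simp
  moreover have "ennreal c * ennreal (1 / c) = 1"
    using c by (simp add: ennreal_mult[symmetric])
  moreover have "enn2real I / c = M * x powr \<sigma>"
  proof -
    have "(2 * x) powr (1 + \<sigma>) = 2 powr (1 + \<sigma>) * x * x powr \<sigma>"
      using x by (simp add: powr_mult powr_add)
    then show ?thesis using x by (simp add: c_def M_def field_simps)
  qed
  ultimately show "phiK K x \<le> ennreal (M * x powr \<sigma>)"
    using c by (simp add: mult.assoc ennreal_mult[symmetric] divide_inverse)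
qed

lemma K_mult_le_powr:
  assumes K: "standing_K K" and B: "condB K \<sigma>" and \<sigma>: "\<sigma> > 0"
  obtains C where "C \<ge> 0" "\<And>x t. 1 \<le> x \<Longrightarrow> 0 < t \<Longrightarrow> t \<le> 1 \<Longrightarrow> K (t * x) \<le> C * x powr \<sigma> * K t"
proof -
  obtain M where M: "M \<ge> 0" "\<And>x. 1 \<le> x \<Longrightarrow> phiK K x \<le> ennreal (M * x powr \<sigma>)"
    using phiK_le_powr[OF assms] by blast
  show ?thesis
  proof (rule that[OF M(1)])
    fix x t :: real assume x: "1 \<le> x" and t: "0 < t" "t \<le> 1"
    have "ennreal (K (t * x) / K t) \<le> ennreal (M * x powr \<sigma>)"
      using phiK_ge[OF t, of K x] M(2)[OF x] by order
    then have "K (t * x) / K t \<le> M * x powr \<sigma>"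
      using M(1) by (simp add: ennreal_le_iff)
    moreover have "K t > 0" using K t by (simp add: standing_K_def)
    ultimately show "K (t * x) \<le> M * x powr \<sigma> * K t"
      by (simp add: divide_le_eq)
  qed
qed

section \<open>The pointwise estimate for \<open>T f\<close>\<close>

lemma young_ineq_weighted:
  fixes k G X Y p :: real
  assumes p: "p > 1" and k: "k \<ge> 0" and G: "G \<ge> 0" and X: "X > 0" and Y: "Y > 0"
  shows "k * G \<le> Y powr (1 - 1/p) * X powr (1/p) * (k * G powr p / X / p + k / Y * (1 - 1/p))"
proof (cases "k = 0 \<or> G = 0")
  case True
  then show ?thesis using k G X Y p by auto
next
  case False
  then have kp: "k > 0" and Gp: "G > 0" using k G by auto
  have "(k * G powr p / X) powr (1/p) * (k / Y) powr (1 - 1/p)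
      \<le> (1/p) * (k * G powr p / X) + (1 - 1/p) * (k / Y)"
    using p kp Gp X Y by (intro Youngs_inequality_0) auto
  moreover have "(k * G powr p / X) powr (1/p) * (k / Y) powr (1 - 1/p)
      = k * G / (Y powr (1 - 1/p) * X powr (1/p))"
  proof -
    have "(k * G powr p / X) powr (1/p) = k powr (1/p) * G / X powr (1/p)"
      using kp Gp X p by (simp add: powr_mult powr_divide powr_powr)
    moreover have "(k / Y) powr (1 - 1/p) = k powr (1 - 1/p) / Y powr (1 - 1/p)"
      using kp Y by (simp add: powr_divide)
    moreover have "k powr (1/p) * k powr (1 - 1/p) = k"
      using kp by (simp add: powr_add[symmetric])
    ultimately show ?thesis by (simp add: field_simps)
  qed
  ultimately show ?thesis
    using X Y by (simp add: divide_le_eq mult.commute mult.left_commute)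
qed

lemma nn_integral_mult_le_holder:
  fixes k G :: "'a \<Rightarrow> real"
  assumes p: "p > 1" and [measurable]: "k \<in> borel_measurable M" "G \<in> borel_measurable M"
    and k0: "\<And>x. k x \<ge> 0" and G0: "\<And>x. G x \<ge> 0"
    and Y: "(\<integral>\<^sup>+x. ennreal (k x) \<partial>M) = ennreal Y"
        and X: "(\<integral>\<^sup>+x. ennreal (k x * G x powr p) \<partial>M) = ennreal X"
    and Y0: "Y \<ge> 0" and X0: "X \<ge> 0"
  shows "(\<integral>\<^sup>+x. ennreal (k x * G x) \<partial>M) \<le> ennreal (Y powr (1 - 1/p) * X powr (1/p))"
proof (cases "Y = 0 \<or> X = 0")
  case True
  have "AE x in M. k x * G x = 0"
  proof (cases "Y = 0")
    case True
    then have "AE x in M. ennreal (k x) = 0"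
      using Y by (subst nn_integral_0_iff_AE[symmetric]) auto
    then show ?thesis by eventually_elim (use k0 in auto)
  next
    case False
    then have "AE x in M. ennreal (k x * G x powr p) = 0"
      using X \<open>Y = 0 \<or> X = 0\<close> by (subst nn_integral_0_iff_AE[symmetric]) auto
    then show ?thesis
    proof eventually_elim
      case (elim x)
      then have "k x * G x powr p = 0"
        using k0[of x] G0[of x] by simp
      then show ?case
        using G0[of x] by auto
    qed
  qed
  then have "(\<integral>\<^sup>+x. ennreal (k x * G x) \<partial>M) = 0"
    by (subst nn_integral_cong_AE[where v = "\<lambda>_. 0"]) auto
  then show ?thesis by simp
next
  case False
  then have Yp: "Y > 0" and Xp: "X > 0" using X0 Y0 by auto
  define C where "C = Y powr (1 - 1/p) * X powr (1/p)"
  define a b where "a = 1 / X / p" and "b = (1 - 1/p) / Y"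
  have ab: "a \<ge> 0" "b \<ge> 0" using Xp Yp p by (auto simp: a_def b_def)
  have "(\<integral>\<^sup>+x. ennreal (k x * G x) \<partial>M)
      \<le> (\<integral>\<^sup>+x. ennreal C * (ennreal a * ennreal (k x * G x powr p) + ennreal b * ennreal (k x)) \<partial>M)"
  proof (intro nn_integral_mono)
    fix x
    have "k x * G x \<le> C * (a * (k x * G x powr p) + b * k x)"
      using young_ineq_weighted[OF p k0 G0 Xp Yp, of x x]
      by (simp add: C_def a_def b_def field_simps)
    then have "ennreal (k x * G x) \<le> ennreal (C * (a * (k x * G x powr p) + b * k x))"
      by (rule ennreal_leI)
    also have "\<dots> = ennreal C * (ennreal a * ennreal (k x * G x powr p) + ennreal b * ennreal (k x))"
      using ab k0[of x] G0[of x]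
      by (simp add: C_def ennreal_mult[symmetric] ennreal_plus[symmetric] del: ennreal_plus)
    finally show "ennreal (k x * G x) \<le> ennreal C * (ennreal a * ennreal (k x * G x powr p) + ennreal b * ennreal (k x))" .
  qed
  also have "\<dots> = ennreal C * (ennreal a * ennreal X + ennreal b * ennreal Y)"
    by (simp add: nn_integral_cmult nn_integral_add X Y)
  also have "\<dots> = ennreal C"
  proof -
    have "a * X + b * Y = 1" using Xp Yp p by (simp add: a_def b_def field_simps)
    then show ?thesis
      using ab Xp Yp by (simp add: ennreal_mult[symmetric] ennreal_plus[symmetric] del: ennreal_plus)
  qed
  finally show ?thesis by (simp add: C_def)
qed

text \<open>The indicator keeps \<open>w\<close> in the open disc, where \<open>1 - |w|\<^sup>2 > 0\<close>; outside it
  \<open>powr\<close> of a negative base would be a junk value.\<close>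
definition disc_kernel :: "real \<Rightarrow> real \<Rightarrow> complex \<Rightarrow> complex \<Rightarrow> real" where
  "disc_kernel a c z w =
     indicator (ball 0 1) w * one_minus_norm_sq w powr c / cmod (1 - cnj w * z) powr (2 + a + c)"

lemma borel_measurable_disc_kernel [measurable]:
  "(\<lambda>x. disc_kernel a c (fst x) (snd x)) \<in> borel_measurable (dA \<Otimes>\<^sub>M dA)"
  "(\<lambda>w. disc_kernel a c z w) \<in> borel_measurable borel"
  "(\<lambda>z. disc_kernel a c z w) \<in> borel_measurable borel"
  unfolding disc_kernel_def by measurable

lemma disc_kernel_nonneg: "disc_kernel a c z w \<ge> 0"
  unfolding disc_kernel_def by (simp add: indicator_def)

lemma disc_kernel_le:
  assumes z: "cmod z < 1" and c: "c \<ge> 0"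
  shows "disc_kernel a c z w \<le> 2 powr c / cmod (1 - cnj w * z) powr (2 + a)"
proof (cases "w \<in> ball 0 1")
  case True
  define L where "L = cmod (1 - cnj w * z)"
  have w: "cmod w < 1" using True by simp
  have L: "L > 0" using norm_one_minus_cnj_mult_pos[OF z] w by (simp add: L_def)
  have "one_minus_norm_sq w \<le> 2 * L"
    using one_minus_norm_sq_bounds[of w] one_minus_norm_le_norm_one_minus_cnj_mult[of z w] z w
    by (simp add: L_def norm_one_minus_cnj_mult_commute[of w z])
  then have "one_minus_norm_sq w powr c / L powr (2 + a + c) \<le> (2 * L) powr c / L powr (2 + a + c)"
    using one_minus_norm_sq_bounds[of w] w c by (intro divide_right_mono powr_mono2) auto
  also have "\<dots> = 2 powr c / L powr (2 + a)"
    using L by (simp add: powr_mult powr_add field_simps)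
  finally show ?thesis using True by (simp add: disc_kernel_def L_def)
qed (simp add: disc_kernel_def)

lemma nn_integral_disc_kernel_le:
  assumes a: "a > 0" and c: "c \<ge> 0"
  obtains C where "C > 0" "\<And>z. cmod z < 1 \<Longrightarrow>
    (\<integral>\<^sup>+w. ennreal (disc_kernel a c z w) \<partial>dA) \<le> ennreal (C * one_minus_norm_sq z powr (-a))"
proof -
  obtain C where C: "C > 0" "\<And>z. cmod z < 1 \<Longrightarrow>
    (\<integral>\<^sup>+w. ennreal (1 / cmod (1 - cnj w * z) powr (2 + a)) \<partial>dA) \<le> ennreal (C * (1 - cmod z) powr (-a))"
    using forelli_rudin_estimate[OF a] by blast
  show ?thesis
  proof (rule that[of "2 powr c * C * 2 powr a"])
    show "2 powr c * C * 2 powr a > 0" using C by simp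
    fix z :: complex assume z: "cmod z < 1"
    have "(\<integral>\<^sup>+w. ennreal (disc_kernel a c z w) \<partial>dA)
        \<le> (\<integral>\<^sup>+w. ennreal (2 powr c) * ennreal (1 / cmod (1 - cnj w * z) powr (2 + a)) \<partial>dA)"
      using disc_kernel_le[OF z c] by (intro nn_integral_mono) (simp add: ennreal_mult[symmetric])
    also have "\<dots> = ennreal (2 powr c) * (\<integral>\<^sup>+w. ennreal (1 / cmod (1 - cnj w * z) powr (2 + a)) \<partial>dA)"
      by (rule nn_integral_cmult) measurable
    also have "\<dots> \<le> ennreal (2 powr c) * ennreal (C * (1 - cmod z) powr (-a))"
      by (intro mult_left_mono C z) auto
    also have "\<dots> \<le> ennreal (2 powr c) * ennreal (C * (2 powr a * one_minus_norm_sq z powr (-a)))"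
    proof -
      have D: "0 < one_minus_norm_sq z" "one_minus_norm_sq z \<le> 2 * (1 - cmod z)"
        using one_minus_norm_sq_pos[OF z] one_minus_norm_sq_bounds[of z] z by auto
      then have "(1 - cmod z) powr (-a) \<le> (one_minus_norm_sq z / 2) powr (-a)"
        using a by (intro powr_mono2') auto
      also have "\<dots> = 2 powr a * one_minus_norm_sq z powr (-a)"
        using D by (simp add: powr_divide powr_minus field_simps)
      finally show ?thesis
        using C by (intro mult_left_mono ennreal_leI) auto
    qed
    also have "\<dots> = ennreal (2 powr c * C * 2 powr a * one_minus_norm_sq z powr (-a))"
      using C by (simp add: ennreal_mult[symmetric] mult_ac)
    finally show "(\<integral>\<^sup>+w. ennreal (disc_kernel a c z w) \<partial>dA)
        \<le> ennreal (2 powr c * C * 2 powr a * one_minus_norm_sq z powr (-a))" .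
  qed
qed

lemma norm_integral_le_nn_integral:
  fixes g :: "'a \<Rightarrow> 'b::{banach, second_countable_topology}"
  shows "ennreal (norm (integral\<^sup>L M g)) \<le> (\<integral>\<^sup>+x. ennreal (norm (g x)) \<partial>M)"
  using integral_norm_bound_ennreal[of M g] by (cases "integrable M g") (auto simp: not_integrable_integral_eq)

lemma norm_T_op_le_kernel_integral:
  assumes "\<alpha> + b = 2 + a + c" "b - 1 = c + q / p"
    and [measurable]: "f \<in> borel_measurable borel"
  shows "ennreal (cmod (T_op \<alpha> b f z))
    \<le> (\<integral>\<^sup>+w. ennreal (disc_kernel a c z w * (cmod (f w) * one_minus_norm_sq w powr (q / p))) \<partial>dA)"
proof -
  define g where "g w = of_real ((1 - (cmod w)\<^sup>2) powr (b - 1) / cmod (1 - cnj w * z) powr (\<alpha> + b)) * f w"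
    for w
  have "ennreal (cmod (T_op \<alpha> b f z)) \<le> (\<integral>\<^sup>+w. ennreal (cmod (g w)) \<partial>dA)"
    unfolding T_op_def g_def by (rule norm_integral_le_nn_integral)
  also have "\<dots> = (\<integral>\<^sup>+w. indicator (ball 0 1) w * ennreal (cmod (g w)) \<partial>dA)"
    unfolding g_def by (rule nn_integral_dA_restrict_disc) measurable
  also have "\<dots> = (\<integral>\<^sup>+w. ennreal (disc_kernel a c z w * (cmod (f w) * one_minus_norm_sq w powr (q / p))) \<partial>dA)"
  proof (intro nn_integral_cong)
    fix w
    show "indicator (ball 0 1) w * ennreal (cmod (g w))
      = ennreal (disc_kernel a c z w * (cmod (f w) * one_minus_norm_sq w powr (q / p)))"
    proof (cases "w \<in> ball 0 1")
      case True
      then have "one_minus_norm_sq w > 0" by (intro one_minus_norm_sq_pos) simp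
      moreover have "cmod (g w) = one_minus_norm_sq w powr (b - 1) / cmod (1 - cnj w * z) powr (\<alpha> + b) * cmod (f w)"
        by (simp add: g_def norm_mult norm_divide one_minus_norm_sq_def)
      ultimately show ?thesis
        using True assms(1,2) by (simp add: disc_kernel_def powr_add)
    qed (simp add: disc_kernel_def)
  qed
  finally show ?thesis .
qed

lemma nn_integral_disc_kernel_mult_finite:
  assumes z: "cmod z < 1" and c: "c \<ge> 0" and a: "a \<ge> 0"
    and [measurable]: "h \<in> borel_measurable borel" and h: "\<And>w. h w \<ge> 0"
    and fin: "(\<integral>\<^sup>+w. ennreal (h w) \<partial>dA) < \<infinity>"
  shows "(\<integral>\<^sup>+w. ennreal (disc_kernel a c z w * h w) \<partial>dA) < \<infinity>"
proof -
  define \<delta> where "\<delta> = 1 - cmod z"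
  have \<delta>: "\<delta> > 0" using z by (simp add: \<delta>_def)
  have "(\<integral>\<^sup>+w. ennreal (disc_kernel a c z w * h w) \<partial>dA)
      \<le> (\<integral>\<^sup>+w. ennreal (2 powr c / \<delta> powr (2 + a)) * ennreal (h w) \<partial>dA)"
  proof (intro nn_integral_mono)
    fix w
    have "disc_kernel a c z w \<le> 2 powr c / \<delta> powr (2 + a)"
    proof (cases "w \<in> ball 0 1")
      case True
      have "\<delta> \<le> cmod (1 - cnj w * z)"
        using one_minus_norm_le_norm_one_minus_cnj_mult[of w z] True by (simp add: \<delta>_def)
      then have "2 powr c / cmod (1 - cnj w * z) powr (2 + a) \<le> 2 powr c / \<delta> powr (2 + a)"
        using \<delta> a by (intro divide_left_mono powr_mono2 mult_pos_pos) auto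
      then show ?thesis
        using disc_kernel_le[OF z c, of a w] by linarith
    qed (simp add: disc_kernel_def)
    then have "disc_kernel a c z w * h w \<le> 2 powr c / \<delta> powr (2 + a) * h w"
      using h[of w] by (rule mult_right_mono)
    then show "ennreal (disc_kernel a c z w * h w) \<le> ennreal (2 powr c / \<delta> powr (2 + a)) * ennreal (h w)"
      using h[of w] by (simp add: ennreal_mult[symmetric] ennreal_leI)
  qed
  also have "\<dots> = ennreal (2 powr c / \<delta> powr (2 + a)) * (\<integral>\<^sup>+w. ennreal (h w) \<partial>dA)"
    by (rule nn_integral_cmult) measurable
  also have "\<dots> < \<infinity>"
    using fin by (simp add: ennreal_mult_less_top)
  finally show ?thesis .
qed

text \<open>Hoelder's inequality with respect to the measure \<open>disc_kernel a c z w dA(w)\<close>, whose total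
  mass is \<open>O((1 - |z|\<^sup>2)\<^sup>-\<^sup>a)\<close>.\<close>
lemma T_op_pointwise_le:
  assumes p: "p > 1" and a: "a > 0" and c: "c \<ge> 0"
    and exps: "\<alpha> + b = 2 + a + c" "b - 1 = c + q / p"
    and [measurable]: "f \<in> borel_measurable borel"
    and fin: "(\<integral>\<^sup>+w. ennreal (cmod (f w) powr p * one_minus_norm_sq w powr q) \<partial>dA) < \<infinity>"
    and z: "cmod z < 1"
    and C: "C \<ge> 0" "(\<integral>\<^sup>+w. ennreal (disc_kernel a c z w) \<partial>dA)
        \<le> ennreal (C * one_minus_norm_sq z powr (-a))"
  shows "ennreal (cmod (T_op \<alpha> b f z) powr p * one_minus_norm_sq z powr (a * p))
    \<le> ennreal (C powr (p - 1) * one_minus_norm_sq z powr a)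
      * (\<integral>\<^sup>+w. ennreal (disc_kernel a c z w * (cmod (f w) powr p * one_minus_norm_sq w powr q)) \<partial>dA)"
proof -
  define k where "k w = disc_kernel a c z w" for w
  define G where "G w = cmod (f w) * one_minus_norm_sq w powr (q / p)" for w
  have [measurable]: "k \<in> borel_measurable dA" "G \<in> borel_measurable dA"
    unfolding k_def G_def by measurable
  have k0: "k w \<ge> 0" for w by (simp add: k_def disc_kernel_nonneg)
  have G0: "G w \<ge> 0" for w by (simp add: G_def)
  define X where "X = (\<integral>\<^sup>+w. ennreal (k w * (cmod (f w) powr p * one_minus_norm_sq w powr q)) \<partial>dA)"
  define Y where "Y = (\<integral>\<^sup>+w. ennreal (k w) \<partial>dA)"
  have XG: "X = (\<integral>\<^sup>+w. ennreal (k w * G w powr p) \<partial>dA)"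
    unfolding X_def
  proof (intro nn_integral_cong)
    fix w
    show "ennreal (k w * (cmod (f w) powr p * one_minus_norm_sq w powr q)) = ennreal (k w * G w powr p)"
    proof (cases "w \<in> ball 0 1")
      case True
      then have "one_minus_norm_sq w > 0" by (intro one_minus_norm_sq_pos) simp
      then show ?thesis
        using p by (simp add: G_def powr_mult powr_powr)
    qed (simp add: k_def disc_kernel_def)
  qed
  have "X < \<infinity>"
    unfolding X_def k_def using z c a fin by (intro nn_integral_disc_kernel_mult_finite) auto
  then obtain X' where X': "X = ennreal X'" "X' \<ge> 0"
    by (cases X rule: ennreal_cases) auto
  have Y_le: "Y \<le> ennreal (C * one_minus_norm_sq z powr (-a))"
    using C by (simp add: Y_def k_def)
  then have "Y < \<infinity>"
    using le_less_trans by fastforce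
  then obtain Y' where Y': "Y = ennreal Y'" "Y' \<ge> 0"
    by (cases Y rule: ennreal_cases) auto
  have Y'_le: "Y' \<le> C * one_minus_norm_sq z powr (-a)"
    using Y_le C(1) unfolding Y'(1) by (simp add: ennreal_le_iff)
  have "ennreal (cmod (T_op \<alpha> b f z)) \<le> (\<integral>\<^sup>+w. ennreal (k w * G w) \<partial>dA)"
    unfolding k_def G_def by (rule norm_T_op_le_kernel_integral[OF exps]) measurable
  also have "\<dots> \<le> ennreal (Y' powr (1 - 1/p) * X' powr (1/p))"
    using X' Y' XG by (intro nn_integral_mult_le_holder[OF p _ _ k0 G0]) (auto simp: Y_def)
  finally have "cmod (T_op \<alpha> b f z) \<le> Y' powr (1 - 1/p) * X' powr (1/p)"
    by (simp add: ennreal_le_iff)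
  then have "cmod (T_op \<alpha> b f z) powr p \<le> (Y' powr (1 - 1/p) * X' powr (1/p)) powr p"
    using p by (intro powr_mono2) auto
  also have "\<dots> = Y' powr (p - 1) * X'"
  proof -
    have "(1 - 1/p) * p = p - 1" "1/p * p = 1"
      using p by (simp_all add: field_simps)
    then show ?thesis
      using X'(2) by (simp add: powr_mult powr_powr)
  qed
  also have "\<dots> \<le> (C * one_minus_norm_sq z powr (-a)) powr (p - 1) * X'"
    using Y' Y'_le X' p by (intro mult_right_mono powr_mono2) auto
  also have "\<dots> = C powr (p - 1) * one_minus_norm_sq z powr (- a * (p - 1)) * X'"
    using C(1) by (simp add: powr_mult powr_powr)
  finally have "cmod (T_op \<alpha> b f z) powr p * one_minus_norm_sq z powr (a * p)
      \<le> C powr (p - 1) * one_minus_norm_sq z powr (- a * (p - 1)) * X' * one_minus_norm_sq z powr (a * p)"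
    by (rule mult_right_mono) simp
  also have "\<dots> = C powr (p - 1) * one_minus_norm_sq z powr a * X'"
  proof -
    have "one_minus_norm_sq z powr (- a * (p - 1)) * one_minus_norm_sq z powr (a * p) = one_minus_norm_sq z powr a"
      by (simp add: powr_add[symmetric] algebra_simps)
    then show ?thesis by (simp add: mult_ac)
  qed
  finally show ?thesis
    using X' C(1) by (simp add: X_def k_def ennreal_mult[symmetric] del: ennreal_mult)
qed

section \<open>Estimates over Carleson boxes\<close>

lemma nn_integral_weighted_disc_kernel_le:
  assumes a: "a \<ge> 0" and c: "c > 0"
  obtains C where "C \<ge> 0" "\<And>w. cmod w < 1 \<Longrightarrow>
    (\<integral>\<^sup>+z. ennreal (one_minus_norm_sq z powr a * disc_kernel a c z w) \<partial>dA) \<le> ennreal C"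
proof -
  obtain CF where CF: "CF > 0" "\<And>w. cmod w < 1 \<Longrightarrow>
    (\<integral>\<^sup>+z. ennreal (1 / cmod (1 - cnj z * w) powr (2 + c)) \<partial>dA) \<le> ennreal (CF * (1 - cmod w) powr (-c))"
    using forelli_rudin_estimate[OF c] by blast
  show ?thesis
  proof (rule that[of "2 powr a * CF * 2 powr c"])
    show "2 powr a * CF * 2 powr c \<ge> 0" using CF by simp
    fix w :: complex assume w: "cmod w < 1"
    have Dw: "0 \<le> one_minus_norm_sq w" "one_minus_norm_sq w \<le> 2 * (1 - cmod w)"
      using one_minus_norm_sq_bounds[of w] w by auto
    have "(\<integral>\<^sup>+z. ennreal (one_minus_norm_sq z powr a * disc_kernel a c z w) \<partial>dA)
        = (\<integral>\<^sup>+z. indicator (ball 0 1) z * ennreal (one_minus_norm_sq z powr a * disc_kernel a c z w) \<partial>dA)"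
      by (rule nn_integral_dA_restrict_disc) measurable
    also have "\<dots> \<le> (\<integral>\<^sup>+z. ennreal (2 powr a * one_minus_norm_sq w powr c)
        * ennreal (1 / cmod (1 - cnj z * w) powr (2 + c)) \<partial>dA)"
    proof (intro nn_integral_mono)
      fix z
      show "indicator (ball 0 1) z * ennreal (one_minus_norm_sq z powr a * disc_kernel a c z w)
          \<le> ennreal (2 powr a * one_minus_norm_sq w powr c) * ennreal (1 / cmod (1 - cnj z * w) powr (2 + c))"
      proof (cases "cmod z < 1")
        case True
        define L where "L = cmod (1 - cnj w * z)"
        have L: "L > 0" using norm_one_minus_cnj_mult_pos[OF True, of w] w by (simp add: L_def)
        have Dz: "0 \<le> one_minus_norm_sq z" "one_minus_norm_sq z \<le> 2 * L"
          using one_minus_norm_sq_bounds[of z] True one_minus_norm_le_norm_one_minus_cnj_mult[of w z] w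
          by (auto simp: L_def)
        have "one_minus_norm_sq z powr a * disc_kernel a c z w
            = one_minus_norm_sq z powr a * one_minus_norm_sq w powr c / L powr (2 + a + c)"
          using w by (simp add: disc_kernel_def L_def)
        also have "\<dots> \<le> (2 * L) powr a * one_minus_norm_sq w powr c / L powr (2 + a + c)"
          using Dz L a by (intro divide_right_mono mult_right_mono powr_mono2) auto
        also have "\<dots> = 2 powr a * one_minus_norm_sq w powr c * (1 / L powr (2 + c))"
          using L by (simp add: powr_mult powr_add field_simps)
        finally show ?thesis
          using True L Dw
          by (simp add: L_def norm_one_minus_cnj_mult_commute[of w z] ennreal_mult[symmetric] ennreal_leI)
      qed simp
    qed
    also have "\<dots> = ennreal (2 powr a * one_minus_norm_sq w powr c)
        * (\<integral>\<^sup>+z. ennreal (1 / cmod (1 - cnj z * w) powr (2 + c)) \<partial>dA)"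
      by (rule nn_integral_cmult) measurable
    also have "\<dots> \<le> ennreal (2 powr a * one_minus_norm_sq w powr c) * ennreal (CF * (1 - cmod w) powr (-c))"
      by (intro mult_left_mono CF w) auto
    also have "\<dots> = ennreal (2 powr a * CF * (one_minus_norm_sq w powr c * (1 - cmod w) powr (-c)))"
      using CF by (simp add: ennreal_mult[symmetric] mult_ac)
    also have "\<dots> \<le> ennreal (2 powr a * CF * 2 powr c)"
    proof (intro ennreal_leI mult_left_mono)
      have "one_minus_norm_sq w powr c \<le> (2 * (1 - cmod w)) powr c"
        using Dw c by (intro powr_mono2) auto
      also have "\<dots> = 2 powr c * (1 - cmod w) powr c"
        using w by (subst powr_mult) auto
      finally have "one_minus_norm_sq w powr c * (1 - cmod w) powr (-c) \<le> 2 powr c * (1 - cmod w) powr c * (1 - cmod w) powr (-c)"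
        by (intro mult_right_mono) auto
      also have "\<dots> = 2 powr c"
        using w by (simp add: powr_minus field_simps)
      finally show "one_minus_norm_sq w powr c * (1 - cmod w) powr (-c) \<le> 2 powr c" .
    qed (use CF in auto)
    finally show "(\<integral>\<^sup>+z. ennreal (one_minus_norm_sq z powr a * disc_kernel a c z w) \<partial>dA)
        \<le> ennreal (2 powr a * CF * 2 powr c)" .
  qed
qed

text \<open>Far from the box, the kernel is essentially constant on it, of size \<open>l\<^sup>a R\<^sup>-\<^sup>2\<^sup>-\<^sup>a\<close>,
  and the box has area \<open>O(l\<^sup>2)\<close>.\<close>
lemma nn_integral_carleson_box_kernel_far_le:
  assumes a: "a \<ge> 0" and c: "c \<ge> 0" and l: "0 < l" "l \<le> 1" and w: "cmod w < 1"
    and far: "10 * l \<le> cmod (w - cis (\<theta> + pi * l))"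
  shows "(\<integral>\<^sup>+z. indicator (carleson_box \<theta> l) z * ennreal (one_minus_norm_sq z powr a * disc_kernel a c z w) \<partial>dA)
    \<le> ennreal (2 powr a * 2 powr c * 2 powr (2 + a + c) * 144 / pi * (l / cmod (w - cis (\<theta> + pi * l))) powr (2 + a))"
proof -
  define \<zeta> where "\<zeta> = cis (\<theta> + pi * l)"
  define R where "R = cmod (w - \<zeta>)"
  have R: "R > 0" using far l unfolding R_def \<zeta>_def by linarith
  have Dw: "0 \<le> one_minus_norm_sq w" "one_minus_norm_sq w \<le> 2 * R"
    using one_minus_norm_sq_bounds[of w] w norm_triangle_ineq2[of \<zeta> w]
    by (auto simp: R_def \<zeta>_def norm_minus_commute)
  define B where "B = (2 * l) powr a * (2 * R) powr c / (R / 2) powr (2 + a + c)"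
  have "(\<integral>\<^sup>+z. indicator (carleson_box \<theta> l) z * ennreal (one_minus_norm_sq z powr a * disc_kernel a c z w) \<partial>dA)
      \<le> (\<integral>\<^sup>+z. ennreal B * indicator (ball \<zeta> (6 * l)) z \<partial>dA)"
  proof (intro nn_integral_mono)
    fix z
    show "indicator (carleson_box \<theta> l) z * ennreal (one_minus_norm_sq z powr a * disc_kernel a c z w)
        \<le> ennreal B * indicator (ball \<zeta> (6 * l)) z"
    proof (cases "z \<in> carleson_box \<theta> l")
      case True
      note box = mem_carleson_boxD[OF l True]
      have z5: "cmod (z - \<zeta>) \<le> 5 * l" using box by (simp add: \<zeta>_def)
      define L where "L = cmod (1 - cnj w * z)"
      have L: "L > 0" using norm_one_minus_cnj_mult_pos[OF box(1), of w] w by (simp add: L_def)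
      have "R \<le> cmod (z - w) + cmod (z - \<zeta>)"
        using norm_triangle_ineq[of "w - z" "z - \<zeta>"] by (simp add: R_def norm_minus_commute)
      then have "R \<le> L + 5 * l"
        using norm_diff_le_norm_one_minus_cnj_mult[of z w] box w z5 by (simp add: L_def)
      then have LR: "R / 2 \<le> L" using far by (simp add: R_def \<zeta>_def)
      have Dz: "0 \<le> one_minus_norm_sq z" "one_minus_norm_sq z \<le> 2 * l"
        using one_minus_norm_sq_bounds[of z] box by auto
      have "one_minus_norm_sq z powr a * disc_kernel a c z w
          = one_minus_norm_sq z powr a * one_minus_norm_sq w powr c / L powr (2 + a + c)"
        using w by (simp add: disc_kernel_def L_def)
      also have "\<dots> \<le> B"
        unfolding B_def using Dz Dw LR L R a c
        by (intro frac_le mult_mono powr_mono2 mult_nonneg_nonneg) auto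
      finally show ?thesis
        using True z5 l by (simp add: ennreal_leI dist_norm norm_minus_commute)
    qed simp
  qed
  also have "\<dots> = ennreal B * emeasure dA (ball \<zeta> (6 * l))"
    by (rule nn_integral_cmult_indicator) simp
  also have "\<dots> \<le> ennreal B * ennreal (4 / pi * (6 * l)\<^sup>2)"
    using l by (intro mult_left_mono emeasure_dA_ball_le) auto
  also have "\<dots> = ennreal (B * (144 / pi * l\<^sup>2))"
    using R l by (simp add: B_def ennreal_mult[symmetric] power2_eq_square)
  also have "B * (144 / pi * l\<^sup>2) = 2 powr a * 2 powr c * 2 powr (2 + a + c) * 144 / pi * (l / R) powr (2 + a)"
  proof -
    have "B = 2 powr a * 2 powr c * 2 powr (2 + a + c) * (l powr a * R powr c / R powr (2 + a + c))"
      using l R by (simp add: B_def powr_mult powr_divide field_simps)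
    moreover have "l powr a * R powr c / R powr (2 + a + c) * l\<^sup>2 = (l / R) powr (2 + a)"
      using l R by (simp add: powr_divide powr_add powr_realpow[symmetric] field_simps power2_eq_square)
    ultimately show ?thesis
      by (simp add: divide_inverse mult_ac)
  qed
  finally show ?thesis by (simp add: R_def \<zeta>_def)
qed

lemma nn_integral_carleson_box_kernel_le:
  assumes a: "a > 0" and c: "c > 0"
  obtains C where "C \<ge> 0" "\<And>\<theta> l w. 0 < l \<Longrightarrow> l \<le> 1 \<Longrightarrow> cmod w < 1 \<Longrightarrow>
    (\<integral>\<^sup>+z. indicator (carleson_box \<theta> l) z * ennreal (one_minus_norm_sq z powr a * disc_kernel a c z w) \<partial>dA)
      \<le> ennreal (C * min 1 ((10 * l / cmod (w - cis (\<theta> + pi * l))) powr (2 + a)))"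
proof -
  obtain C1 where C1: "C1 \<ge> 0" "\<And>w. cmod w < 1 \<Longrightarrow>
    (\<integral>\<^sup>+z. ennreal (one_minus_norm_sq z powr a * disc_kernel a c z w) \<partial>dA) \<le> ennreal C1"
    using nn_integral_weighted_disc_kernel_le[of a c] a c by auto
  define C2 where "C2 = 2 powr a * 2 powr c * 2 powr (2 + a + c) * 144 / pi"
  show ?thesis
  proof (rule that[of "max C1 C2"])
    show "max C1 C2 \<ge> 0" using C1 by simp
    fix \<theta> l :: real and w :: complex assume l: "0 < l" "l \<le> 1" and w: "cmod w < 1"
    define R where "R = cmod (w - cis (\<theta> + pi * l))"
    have "1 - cmod w \<le> R"
      using norm_triangle_ineq2[of "cis (\<theta> + pi * l)" w] by (simp add: R_def norm_minus_commute)
    then have R: "R > 0" using w by linarith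
    define J where "J = (\<integral>\<^sup>+z. indicator (carleson_box \<theta> l) z * ennreal (one_minus_norm_sq z powr a * disc_kernel a c z w) \<partial>dA)"
    show "J \<le> ennreal (max C1 C2 * min 1 ((10 * l / R) powr (2 + a)))"
    proof (cases "R < 10 * l")
      case True
      then have "min 1 ((10 * l / R) powr (2 + a)) = 1"
        using R a ge_one_powr_ge_zero[of "10 * l / R" "2 + a"] by simp
      have "J \<le> (\<integral>\<^sup>+z. ennreal (one_minus_norm_sq z powr a * disc_kernel a c z w) \<partial>dA)"
        unfolding J_def by (intro nn_integral_mono) (simp add: indicator_def)
      also have "\<dots> \<le> ennreal C1"
        using C1(2)[OF w] .
      also have "\<dots> \<le> ennreal (max C1 C2 * min 1 ((10 * l / R) powr (2 + a)))"
        using \<open>min 1 ((10 * l / R) powr (2 + a)) = 1\<close> by (simp add: ennreal_leI)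
      finally show ?thesis .
    next
      case False
      have "J \<le> ennreal (C2 * (l / R) powr (2 + a))"
        unfolding J_def R_def C2_def using False a c l w
        by (intro nn_integral_carleson_box_kernel_far_le) (auto simp: R_def)
      also have "\<dots> \<le> ennreal (C2 * (10 * l / R) powr (2 + a))"
        using l R a by (intro ennreal_leI mult_left_mono powr_mono2) (auto simp: C2_def divide_right_mono)
      also have "\<dots> \<le> ennreal (max C1 C2 * min 1 ((10 * l / R) powr (2 + a)))"
      proof -
        have "(10 * l / R) powr (2 + a) \<le> 1"
          using False R l a by (intro powr_le1) auto
        then show ?thesis
          by (simp add: min_absorb2 ennreal_leI mult_right_mono)
      qed
      finally show ?thesis .
    qed
  qed
qed

lemma K_Carleson_nonnegE:
  assumes "K_Carleson K \<mu>" and K: "standing_K K"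
  obtains C where "C \<ge> 0" "\<And>\<theta> l. 0 < l \<Longrightarrow> l \<le> 1 \<Longrightarrow> emeasure \<mu> (carleson_box \<theta> l) \<le> ennreal (C * K l)"
proof -
  obtain C where C: "\<And>\<theta> l. 0 < l \<Longrightarrow> l \<le> 1 \<Longrightarrow> emeasure \<mu> (carleson_box \<theta> l) \<le> ennreal (C * K l)"
    using assms(1) unfolding K_Carleson_def by blast
  show ?thesis
  proof (rule that[of "max C 0"])
    fix \<theta> l :: real assume l: "0 < l" "l \<le> 1"
    have "C * K l \<le> max C 0 * K l"
      using K l by (intro mult_right_mono) (auto simp: standing_K_def)
    then show "emeasure \<mu> (carleson_box \<theta> l) \<le> ennreal (max C 0 * K l)"
      using C[OF l, of \<theta>] ennreal_leI order.trans by blast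
  qed simp
qed

lemma K_Carleson_density_nn_integral_finite:
  assumes "K_Carleson K (density dA g)" and [measurable]: "g \<in> borel_measurable borel"
  shows "(\<integral>\<^sup>+w. g w \<partial>dA) < \<infinity>"
proof -
  obtain C where C: "\<And>\<theta> l. 0 < l \<Longrightarrow> l \<le> 1 \<Longrightarrow> emeasure (density dA g) (carleson_box \<theta> l)
      \<le> ennreal (C * K l)"
    using assms(1) unfolding K_Carleson_def by blast
  have "(\<integral>\<^sup>+w. g w \<partial>dA) = emeasure (density dA g) UNIV"
    by (simp add: emeasure_density)
  also have "\<dots> = emeasure (density dA g) (UNIV \<inter> ball 0 1)"
    by (rule emeasure_density_dA_restrict_disc) auto
  also have "\<dots> \<le> emeasure (density dA g) (carleson_box (- pi) 1)"
    using disc_subset_carleson_box by (intro emeasure_mono) auto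
  also have "\<dots> \<le> ennreal (C * K 1)"
    by (rule C) auto
  finally show ?thesis
    using le_less_trans by fastforce
qed

text \<open>The discs of radius \<open>10 l 2\<^sup>k\<close> about the boundary point lie in Carleson boxes of size
  \<open>\<le> 20 l 2\<^sup>k\<close>, whose measure grows like \<open>2\<^sup>\<sigma>\<^sup>k K(l)\<close>.\<close>
lemma nn_integral_min_one_powr_K_Carleson_le:
  assumes K: "standing_K K"
    and growth: "CK \<ge> 0" "\<And>x t. 1 \<le> x \<Longrightarrow> 0 < t \<Longrightarrow> t \<le> 1 \<Longrightarrow> K (t * x) \<le> CK * x powr \<sigma> * K t"
    and [measurable]: "g \<in> borel_measurable borel"
    and carleson: "C \<ge> 0"
      "\<And>\<theta> l. 0 < l \<Longrightarrow> l \<le> 1 \<Longrightarrow> emeasure (density dA g) (carleson_box \<theta> l) \<le> ennreal (C * K l)"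
    and \<sigma>: "0 \<le> \<sigma>" "\<sigma> < \<beta>" and l: "0 < l" "l \<le> 1"
  shows "(\<integral>\<^sup>+w. ennreal (min 1 ((10 * l / cmod (w - cis \<theta>)) powr \<beta>)) \<partial>density dA g)
    \<le> ennreal (C * CK * 20 powr \<sigma> * K l * 2 powr \<beta> / (1 - 2 powr (\<sigma> - \<beta>)))"
proof (rule nn_integral_min_one_powr_le)
  show "0 \<le> C * CK * 20 powr \<sigma> * K l"
    using growth carleson K l by (auto simp: standing_K_def)
  fix k :: nat
  define r where "r = 10 * l * 2 ^ k"
  have r: "r > 0" using l by (simp add: r_def)
  have "{w \<in> space (density dA g). cmod (w - cis \<theta>) < 10 * l * 2 ^ k} = ball (cis \<theta>) r"
    by (auto simp: r_def dist_norm norm_minus_commute)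
  then have "emeasure (density dA g) {w \<in> space (density dA g). cmod (w - cis \<theta>) < 10 * l * 2 ^ k}
      = emeasure (density dA g) (ball (cis \<theta>) r \<inter> ball 0 1)"
    by (simp add: emeasure_density_dA_restrict_disc[of _ "ball (cis \<theta>) r"])
  also have "\<dots> \<le> emeasure (density dA g) (carleson_box (\<theta> - pi * min 1 (2 * r)) (min 1 (2 * r)))"
    using disc_inter_ball_subset_carleson_box[OF r] by (intro emeasure_mono) auto
  also have "\<dots> \<le> ennreal (C * K (min 1 (2 * r)))"
    using r by (intro carleson) auto
  also have "\<dots> \<le> ennreal (C * (CK * (20 * 2 ^ k) powr \<sigma> * K l))"
  proof (intro ennreal_leI mult_left_mono)
    have "K (min 1 (2 * r)) \<le> K (l * (20 * 2 ^ k))"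
      using K r unfolding standing_K_def by (intro mono_onD[of "{0..}" K]) (auto simp: r_def)
    also have "\<dots> \<le> CK * (20 * 2 ^ k) powr \<sigma> * K l"
    proof (rule growth(2))
      have "(1::real) \<le> 2 ^ k" by simp
      then show "1 \<le> 20 * (2::real) ^ k" by linarith
    qed (use l in auto)
    finally show "K (min 1 (2 * r)) \<le> CK * (20 * 2 ^ k) powr \<sigma> * K l" .
  qed (use carleson in auto)
  also have "\<dots> = ennreal (C * CK * 20 powr \<sigma> * K l * (2 powr \<sigma>) ^ k)"
  proof -
    have "(20 * 2 ^ k) powr \<sigma> = 20 powr \<sigma> * (2 powr \<sigma>) ^ k"
      by (simp add: powr_mult powr_realpow[symmetric] powr_powr mult.commute powr_power)
    then show ?thesis by (simp add: mult_ac)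
  qed
  finally show "emeasure (density dA g) {w \<in> space (density dA g). cmod (w - cis \<theta>) < 10 * l * 2 ^ k}
      \<le> ennreal (C * CK * 20 powr \<sigma> * K l * (2 powr \<sigma>) ^ k)" .
qed (use l \<sigma> in auto)

lemma emeasure_density_le_nn_integral:
  "emeasure (density M g) A \<le> (\<integral>\<^sup>+x. g x * indicator A x \<partial>M)"
  unfolding density_def emeasure_measure_of_conv by auto

lemma emeasure_T_op_density_carleson_box_le:
  assumes p: "p > 1" and a: "a > 0" and c: "c > 0"
    and exps: "\<alpha> + b = 2 + a + c" "b - 1 = c + q / p"
    and [measurable]: "f \<in> borel_measurable borel"
    and fin: "(\<integral>\<^sup>+w. ennreal (cmod (f w) powr p * one_minus_norm_sq w powr q) \<partial>dA) < \<infinity>"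
  obtains C where "C \<ge> 0" "\<And>\<theta> l. 0 < l \<Longrightarrow> l \<le> 1 \<Longrightarrow>
    emeasure (density dA (\<lambda>z. ennreal (cmod (T_op \<alpha> b f z) powr p * one_minus_norm_sq z powr (a * p))))
      (carleson_box \<theta> l)
    \<le> ennreal C * (\<integral>\<^sup>+w. ennreal (min 1 ((10 * l / cmod (w - cis (\<theta> + pi * l))) powr (2 + a)))
        \<partial>density dA (\<lambda>w. ennreal (cmod (f w) powr p * one_minus_norm_sq w powr q)))"
proof -
  obtain Ck where Ck: "Ck > 0" "\<And>z. cmod z < 1 \<Longrightarrow>
    (\<integral>\<^sup>+w. ennreal (disc_kernel a c z w) \<partial>dA) \<le> ennreal (Ck * one_minus_norm_sq z powr (-a))"
    using nn_integral_disc_kernel_le[of a c] a c by auto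
  obtain CJ where CJ: "CJ \<ge> 0" "\<And>\<theta> l w. 0 < l \<Longrightarrow> l \<le> 1 \<Longrightarrow> cmod w < 1 \<Longrightarrow>
    (\<integral>\<^sup>+z. indicator (carleson_box \<theta> l) z * ennreal (one_minus_norm_sq z powr a * disc_kernel a c z w) \<partial>dA)
      \<le> ennreal (CJ * min 1 ((10 * l / cmod (w - cis (\<theta> + pi * l))) powr (2 + a)))"
    using nn_integral_carleson_box_kernel_le[OF a c] by blast
  define h where "h w = cmod (f w) powr p * one_minus_norm_sq w powr q" for w
  have [measurable]: "h \<in> borel_measurable borel" unfolding h_def by measurable
  have h0: "h w \<ge> 0" for w by (simp add: h_def)
  show ?thesis
  proof (rule that[of "Ck powr (p - 1) * CJ"])
    show "Ck powr (p - 1) * CJ \<ge> 0" using CJ by simp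
    fix \<theta> l :: real assume l: "0 < l" "l \<le> 1"
    define mn where "mn w = min 1 ((10 * l / cmod (w - cis (\<theta> + pi * l))) powr (2 + a))" for w
    define J where "J w = (\<lambda>z. indicator (carleson_box \<theta> l) z * ennreal (one_minus_norm_sq z powr a * disc_kernel a c z w))"
      for w
    define \<Phi> where "\<Phi> z w = ennreal (Ck powr (p - 1) * h w) * J w z" for z w
    have [measurable]: "(\<lambda>(z, w). \<Phi> z w) \<in> borel_measurable (dA \<Otimes>\<^sub>M dA)"
      unfolding \<Phi>_def J_def case_prod_unfold by measurable
    have "emeasure (density dA (\<lambda>z. ennreal (cmod (T_op \<alpha> b f z) powr p * one_minus_norm_sq z powr (a * p))))
        (carleson_box \<theta> l)
      \<le> (\<integral>\<^sup>+z. ennreal (cmod (T_op \<alpha> b f z) powr p * one_minus_norm_sq z powr (a * p))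
          * indicator (carleson_box \<theta> l) z \<partial>dA)"
      by (rule emeasure_density_le_nn_integral)
    also have "\<dots> \<le> (\<integral>\<^sup>+z. (\<integral>\<^sup>+w. \<Phi> z w \<partial>dA) \<partial>dA)"
    proof (intro nn_integral_mono)
      fix z
      show "ennreal (cmod (T_op \<alpha> b f z) powr p * one_minus_norm_sq z powr (a * p))
          * indicator (carleson_box \<theta> l) z \<le> (\<integral>\<^sup>+w. \<Phi> z w \<partial>dA)"
      proof (cases "z \<in> carleson_box \<theta> l")
        case True
        have z: "cmod z < 1" using mem_carleson_boxD[OF l True] by simp
        have "ennreal (cmod (T_op \<alpha> b f z) powr p * one_minus_norm_sq z powr (a * p))
            \<le> ennreal (Ck powr (p - 1) * one_minus_norm_sq z powr a) * (\<integral>\<^sup>+w. ennreal (disc_kernel a c z w * h w) \<partial>dA)"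
          unfolding h_def using Ck z a c
          by (intro T_op_pointwise_le[OF p _ _ exps _ fin]) (auto simp: mult.commute)
        also have "\<dots> = (\<integral>\<^sup>+w. ennreal (Ck powr (p - 1) * one_minus_norm_sq z powr a)
            * ennreal (disc_kernel a c z w * h w) \<partial>dA)"
          by (rule nn_integral_cmult[symmetric]) measurable
        also have "\<dots> = (\<integral>\<^sup>+w. \<Phi> z w \<partial>dA)"
          using True h0 disc_kernel_nonneg
          by (intro nn_integral_cong) (simp add: \<Phi>_def J_def ennreal_mult[symmetric] mult_ac del: ennreal_mult)
        finally show ?thesis using True by simp
      qed simp
    qed
    also have "\<dots> = (\<integral>\<^sup>+w. (\<integral>\<^sup>+z. \<Phi> z w \<partial>dA) \<partial>dA)"
      by (rule dA2.Fubini'[symmetric]) measurable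
    also have "\<dots> \<le> (\<integral>\<^sup>+w. ennreal (h w) * ennreal (Ck powr (p - 1) * CJ * mn w) \<partial>dA)"
    proof (intro nn_integral_mono)
      fix w
      have "(\<integral>\<^sup>+z. \<Phi> z w \<partial>dA) = ennreal (Ck powr (p - 1) * h w) * (\<integral>\<^sup>+z. J w z \<partial>dA)"
        unfolding \<Phi>_def J_def by (rule nn_integral_cmult) measurable
      also have "\<dots> \<le> ennreal (Ck powr (p - 1) * h w) * ennreal (CJ * mn w)"
      proof (cases "cmod w < 1")
        case True
        then show ?thesis
          unfolding J_def mn_def by (intro mult_left_mono CJ(2) l) auto
      next
        case False
        then have "J w z = 0" for z by (simp add: J_def disc_kernel_def)
        then show ?thesis by simp
      qed
      also have "\<dots> = ennreal (h w) * ennreal (Ck powr (p - 1) * CJ * mn w)"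
        using CJ h0[of w] by (simp add: mn_def ennreal_mult[symmetric] mult_ac del: ennreal_mult)
      finally show "(\<integral>\<^sup>+z. \<Phi> z w \<partial>dA) \<le> ennreal (h w) * ennreal (Ck powr (p - 1) * CJ * mn w)" .
    qed
    also have "\<dots> = (\<integral>\<^sup>+w. ennreal (Ck powr (p - 1) * CJ * mn w) \<partial>density dA (\<lambda>w. ennreal (h w)))"
      by (rule nn_integral_density[symmetric]) (auto simp: mn_def)
    also have "\<dots> = ennreal (Ck powr (p - 1) * CJ)
        * (\<integral>\<^sup>+w. ennreal (mn w) \<partial>density dA (\<lambda>w. ennreal (h w)))"
      using CJ by (subst nn_integral_cmult[symmetric]) (auto simp: mn_def ennreal_mult[symmetric])
    finally show "emeasure (density dA (\<lambda>z. ennreal (cmod (T_op \<alpha> b f z) powr p * one_minus_norm_sq z powr (a * p))))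
        (carleson_box \<theta> l)
      \<le> ennreal (Ck powr (p - 1) * CJ) * (\<integral>\<^sup>+w. ennreal (min 1 ((10 * l / cmod (w - cis (\<theta> + pi * l))) powr (2 + a)))
        \<partial>density dA (\<lambda>w. ennreal (cmod (f w) powr p * one_minus_norm_sq w powr q)))"
      by (simp add: mn_def h_def)
  qed
qed

lemma K_Carleson_if_le_tail_integral:
  assumes K: "standing_K K" "condB K \<sigma>" "0 < \<sigma>" "\<sigma> < \<beta>"
    and [measurable]: "g \<in> borel_measurable borel" and carleson: "K_Carleson K (density dA g)"
    and CT: "CT \<ge> 0" "\<And>\<theta> l. 0 < l \<Longrightarrow> l \<le> 1 \<Longrightarrow> emeasure \<mu> (carleson_box \<theta> l)
      \<le> ennreal CT * (\<integral>\<^sup>+w. ennreal (min 1 ((10 * l / cmod (w - cis (\<theta> + pi * l))) powr \<beta>)) \<partial>density dA g)"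
  shows "K_Carleson K \<mu>"
proof -
  obtain C0 where C0: "C0 \<ge> 0" "\<And>\<theta> l. 0 < l \<Longrightarrow> l \<le> 1 \<Longrightarrow> emeasure (density dA g) (carleson_box \<theta> l)
      \<le> ennreal (C0 * K l)"
    using K_Carleson_nonnegE[OF carleson K(1)] by blast
  obtain CK where CK: "CK \<ge> 0" "\<And>x t. 1 \<le> x \<Longrightarrow> 0 < t \<Longrightarrow> t \<le> 1 \<Longrightarrow> K (t * x) \<le> CK * x powr \<sigma> * K t"
    using K_mult_le_powr[OF K(1-3)] by blast
  define C where "C = CT * (C0 * CK * 20 powr \<sigma> * 2 powr \<beta> / (1 - 2 powr (\<sigma> - \<beta>)))"
  show ?thesis
    unfolding K_Carleson_def
  proof (intro exI[of _ C] allI impI)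
    fix \<theta> l :: real assume "0 < l \<and> l \<le> 1"
    then have l: "0 < l" "l \<le> 1" by auto
    note CT(2)[OF l, of \<theta>]
    also have "ennreal CT * (\<integral>\<^sup>+w. ennreal (min 1 ((10 * l / cmod (w - cis (\<theta> + pi * l))) powr \<beta>)) \<partial>density dA g)
        \<le> ennreal CT * ennreal (C0 * CK * 20 powr \<sigma> * K l * 2 powr \<beta> / (1 - 2 powr (\<sigma> - \<beta>)))"
      using K l C0 CK by (intro mult_left_mono nn_integral_min_one_powr_K_Carleson_le) auto
    also have "\<dots> = ennreal (C * K l)"
    proof -
      have "2 powr (\<sigma> - \<beta>) < 1"
        using K(4) by (simp add: powr_less_one)
      then have "0 \<le> C0 * CK * 20 powr \<sigma> * K l * 2 powr \<beta> / (1 - 2 powr (\<sigma> - \<beta>))"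
        using C0(1) CK(1) K(1) l by (auto simp: standing_K_def)
      then show ?thesis
        using CT(1) by (simp add: C_def ennreal_mult[symmetric] mult_ac del: ennreal_mult)
    qed
    finally show "emeasure \<mu> (carleson_box \<theta> l) \<le> ennreal (C * K l)" .
  qed
qed

theorem lemma2p7:
  fixes K :: "real \<Rightarrow> real" and \<sigma> s p \<alpha> b :: real and f :: "complex \<Rightarrow> complex"
  assumes "standing_K K" and "condB K \<sigma>" and "0 < \<sigma>" and "\<sigma> < 2"
    and "0 < s" and "s < 1" and "1 < p"
    and "(2 - s) / p + p / (p - 1) < \<alpha>"
    and "2 + p + (s - 2) / p < b"
    and "integrable dA f"
    and "K_Carleson K (density dA (\<lambda>z. ennreal ((cmod (f z)) powr p * (1 - (cmod z)\<^sup>2) powr (p - 2 + s))))"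
  shows "K_Carleson K (density dA (\<lambda>z. ennreal ((cmod (T_op \<alpha> b f z)) powr p
                                     * (1 - (cmod z)\<^sup>2) powr (p * \<alpha> - 2 + s))))"
proof -
  define q a c where "q = p - 2 + s" and "a = \<alpha> - (2 - s) / p" and "c = b - 2 + (2 - s) / p"
  have p: "p > 1" "p > 0" using assms(7) by auto
  have a: "a > 0" using assms(8) p by (simp add: a_def) (smt (verit) divide_pos_pos)
  have c: "c > 0" using assms(9) p by (simp add: c_def diff_divide_distrib minus_divide_left)
  have exps: "\<alpha> + b = 2 + a + c" "b - 1 = c + q / p" "p * \<alpha> - 2 + s = a * p"
    using p by (simp_all add: a_def c_def q_def field_simps)
  have [measurable]: "f \<in> borel_measurable borel"
    using borel_measurable_integrable[OF assms(10)] by (simp add: measurable_cong_sets[OF sets_dA refl])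
  define g where "g = (\<lambda>w. ennreal (cmod (f w) powr p * one_minus_norm_sq w powr q))"
  have g[measurable]: "g \<in> borel_measurable borel" unfolding g_def by measurable
  have carleson: "K_Carleson K (density dA g)"
    using assms(11) unfolding g_def q_def one_minus_norm_sq_def .
  have fin: "(\<integral>\<^sup>+w. g w \<partial>dA) < \<infinity>"
    by (rule K_Carleson_density_nn_integral_finite[OF carleson]) measurable
  obtain CT where CT: "CT \<ge> 0" "\<And>\<theta> l. 0 < l \<Longrightarrow> l \<le> 1 \<Longrightarrow>
    emeasure (density dA (\<lambda>z. ennreal (cmod (T_op \<alpha> b f z) powr p * one_minus_norm_sq z powr (a * p)))) (carleson_box \<theta> l)
      \<le> ennreal CT * (\<integral>\<^sup>+w. ennreal (min 1 ((10 * l / cmod (w - cis (\<theta> + pi * l))) powr (2 + a))) \<partial>density dA g)"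
    by (rule emeasure_T_op_density_carleson_box_le[OF p(1) a c exps(1,2) _ fin[unfolded g_def], folded g_def])
      measurable
  have "\<sigma> < 2 + a" using assms(4) a by simp
  from K_Carleson_if_le_tail_integral[OF assms(1-3) this g carleson CT]
  show ?thesis
    unfolding one_minus_norm_sq_def[symmetric] exps(3) .
qed

end
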